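(* Let $E$ be a graph. (1) The cardinality of the set of shift-tail equivalence classes of $\partial E$ is at most the cardinality of the set of unitary equivalence classes of irreducible $*$-representations of $C^*(E)$. Consequently, if any two ($*$-)representations of $C^*(E)$ are unitarily equivalent, then any two paths in $\partial E$ are shift-tail equivalent. (2) For any field $k$, the cardinality of the set of shift-tail equivalence classes of $\partial E$ is at most the cardinality of the set of algebraic equivalence classes of irreducible representations of $L_k(E)$. Consequently, if there exists a field $k$ such that any two representations of $L_k(E)$ are algebraically equivalent, then any two paths in $\partial E$ are shift-tail equivalent.
   Context: A graph $E=(E^0,E^1,r,s)$ has vertex set $E^0$, edge set $E^1$, range and source maps; no countability assumed. A vertex is singular if it emits no edges or infinitely many edges, regular otherwise. Finite paths include vertices (length $0$) and sequences $e_1\cdots e_n$ with $r(e_i)=s(e_{i+1})$; infinite paths are sequences $e_1e_2\cdots$. Boundary paths $\partial E$: infinite paths together with finite paths whose range is singular. The shift $\sigma_E$ removes the first edge (fixes vertices; sends a single edge $e$ to $r(e)$); $\alpha,\beta\in\partial E$ are shift-tail equivalent if $\sigma_E^m(\alpha)=\sigma_E^n(\beta)$ for some $m,n\in\mathbb{N}$. $L_k(E)$: universal $k$-algebra generated by pairwise orthogonal idempotents $p_v$ and elements $s_e,s_e^*$ with $p_{s(e)}s_e=s_e=s_ep_{r(e)}$, $p_{r(e)}s_e^*=s_e^*=s_e^*p_{s(e)}$, $s_e^*s_f=\delta_{e,f}p_{r(e)}$, $p_v=\sum_{s(e)=v}s_es_e^*$ for regular $v$. $C^*(E)$: universal $C^*$-algebra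 generated by mutually orthogonal projections $p_v$ and partial isometries $s_e$ with mutually orthogonal ranges, $s_e^*s_e=p_{r(e)}$, $s_es_e^*\le p_{s(e)}$, $p_v=\sum_{s(e)=v}s_es_e^*$ for regular $v$. Algebraic equivalence: intertwined by a linear isomorphism; unitary equivalence: intertwined by a unitary. *)

theory Defs
  imports "HOL-Analysis.Analysis"
begin

record ('v, 'e) graph =
  verts :: "'v set"
  edges :: "'e set"
  rng   :: "'e \<Rightarrow> 'v"
  src   :: "'e \<Rightarrow> 'v"

definition wf_graph :: "('v, 'e) graph \<Rightarrow> bool" where
  "wf_graph G \<longleftrightarrow> (\<forall>e\<in>edges G. src G e \<in> verts G \<and> rng G e \<in> verts G)"

definition emits :: "('v, 'e) graph \<Rightarrow> 'v \<Rightarrow> 'e set" where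
  "emits G v = {e \<in> edges G. src G e = v}"

definition singular :: "('v, 'e) graph \<Rightarrow> 'v \<Rightarrow> bool" where
  "singular G v \<longleftrightarrow> emits G v = {} \<or> infinite (emits G v)"

definition regular :: "('v, 'e) graph \<Rightarrow> 'v \<Rightarrow> bool" where
  "regular G v \<longleftrightarrow> v \<in> verts G \<and> \<not> singular G v"

text \<open>Paths: vertices (length 0), finite nonempty edge sequences, infinite edge sequences.\<close>
datatype ('v, 'e) path = PVert 'v | PFin "'e list" | PInf "nat \<Rightarrow> 'e"

definition fin_path :: "('v, 'e) graph \<Rightarrow> 'e list \<Rightarrow> bool" where
  "fin_path G es \<longleftrightarrow> es \<noteq> [] \<and> set es \<subseteq> edges G \<and>
     (\<forall>i. Suc i < length es \<longrightarrow> rng G (es ! i) = src G (es ! Suc i))"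

definition inf_path :: "('v, 'e) graph \<Rightarrow> (nat \<Rightarrow> 'e) \<Rightarrow> bool" where
  "inf_path G f \<longleftrightarrow> (\<forall>i. f i \<in> edges G \<and> rng G (f i) = src G (f (Suc i)))"

definition boundary :: "('v, 'e) graph \<Rightarrow> ('v, 'e) path set" where
  "boundary G =
     {PVert v | v. v \<in> verts G \<and> singular G v}
   \<union> {PFin es | es. fin_path G es \<and> singular G (rng G (last es))}
   \<union> {PInf f | f. inf_path G f}"

fun shift :: "('v, 'e) graph \<Rightarrow> ('v, 'e) path \<Rightarrow> ('v, 'e) path" where
  "shift G (PVert v) = PVert v"
| "shift G (PFin []) = PFin []"
| "shift G (PFin [e]) = PVert (rng G e)"
| "shift G (PFin (e # f # es)) = PFin (f # es)"
| "shift G (PInf f) = PInf (\<lambda>n. f (Suc n))"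

definition shift_tail_equiv :: "('v, 'e) graph \<Rightarrow> ('v, 'e) path \<Rightarrow> ('v, 'e) path \<Rightarrow> bool" where
  "shift_tail_equiv G \<alpha> \<beta> \<longleftrightarrow> (\<exists>m n. (shift G ^^ m) \<alpha> = (shift G ^^ n) \<beta>)"

definition shift_tail_classes :: "('v, 'e) graph \<Rightarrow> ('v, 'e) path set set" where
  "shift_tail_classes G = boundary G //
     {(\<alpha>, \<beta>). \<alpha> \<in> boundary G \<and> \<beta> \<in> boundary G \<and> shift_tail_equiv G \<alpha> \<beta>}"

text \<open>A representation of L_k(E) on a k-vector space V (realised as a subspace of the
  function space 'a => 'k) is, by the universal property of L_k(E), the same as a family
  of linear operators P v, S e, S' e on V satisfying the defining relations.\<close>

type_synonym ('a, 'k, 'v, 'e) lrep =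
  "('a \<Rightarrow> 'k) set \<times> ('v \<Rightarrow> ('a \<Rightarrow> 'k) \<Rightarrow> ('a \<Rightarrow> 'k))
     \<times> ('e \<Rightarrow> ('a \<Rightarrow> 'k) \<Rightarrow> ('a \<Rightarrow> 'k)) \<times> ('e \<Rightarrow> ('a \<Rightarrow> 'k) \<Rightarrow> ('a \<Rightarrow> 'k))"

definition ksubspace :: "('a \<Rightarrow> 'k::field) set \<Rightarrow> bool" where
  "ksubspace V \<longleftrightarrow> (\<lambda>_. 0) \<in> V \<and> (\<forall>x\<in>V. \<forall>y\<in>V. (\<lambda>i. x i + y i) \<in> V)
     \<and> (\<forall>c. \<forall>x\<in>V. (\<lambda>i. c * x i) \<in> V)"

definition klinear_on :: "('a \<Rightarrow> 'k::field) set \<Rightarrow> (('a \<Rightarrow> 'k) \<Rightarrow> ('b \<Rightarrow> 'k)) \<Rightarrow> bool" where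
  "klinear_on V T \<longleftrightarrow> (\<forall>x\<in>V. \<forall>y\<in>V. T (\<lambda>i. x i + y i) = (\<lambda>i. T x i + T y i))
     \<and> (\<forall>c. \<forall>x\<in>V. T (\<lambda>i. c * x i) = (\<lambda>i. c * T x i))"

definition kop :: "('a \<Rightarrow> 'k::field) set \<Rightarrow> (('a \<Rightarrow> 'k) \<Rightarrow> ('a \<Rightarrow> 'k)) \<Rightarrow> bool" where
  "kop V T \<longleftrightarrow> klinear_on V T \<and> T ` V \<subseteq> V"

definition leavitt_rep :: "('v, 'e) graph \<Rightarrow> ('a, 'k::field, 'v, 'e) lrep \<Rightarrow> bool" where
  "leavitt_rep G R \<longleftrightarrow> (case R of (V, P, S, S') \<Rightarrow>
     ksubspace V
   \<and> (\<forall>v\<in>verts G. kop V (P v))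
   \<and> (\<forall>e\<in>edges G. kop V (S e) \<and> kop V (S' e))
   \<and> (\<forall>v\<in>verts G. \<forall>w\<in>verts G. \<forall>x\<in>V.
        P v (P w x) = (if v = w then P v x else (\<lambda>_. 0)))
   \<and> (\<forall>e\<in>edges G. \<forall>x\<in>V. P (src G e) (S e x) = S e x \<and> S e (P (rng G e) x) = S e x)
   \<and> (\<forall>e\<in>edges G. \<forall>x\<in>V. P (rng G e) (S' e x) = S' e x \<and> S' e (P (src G e) x) = S' e x)
   \<and> (\<forall>e\<in>edges G. \<forall>f\<in>edges G. \<forall>x\<in>V.
        S' e (S f x) = (if e = f then P (rng G e) x else (\<lambda>_. 0)))
   \<and> (\<forall>v. regular G v \<longrightarrow> (\<forall>x\<in>V. P v x = (\<lambda>i. \<Sum>e\<in>emits G v. S e (S' e x) i))))"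

definition leavitt_invariant :: "('v, 'e) graph \<Rightarrow> ('a, 'k::field, 'v, 'e) lrep \<Rightarrow> ('a \<Rightarrow> 'k) set \<Rightarrow> bool" where
  "leavitt_invariant G R W \<longleftrightarrow> (case R of (V, P, S, S') \<Rightarrow>
     ksubspace W \<and> W \<subseteq> V
   \<and> (\<forall>v\<in>verts G. P v ` W \<subseteq> W)
   \<and> (\<forall>e\<in>edges G. S e ` W \<subseteq> W \<and> S' e ` W \<subseteq> W))"

definition leavitt_irred :: "('v, 'e) graph \<Rightarrow> ('a, 'k::field, 'v, 'e) lrep \<Rightarrow> bool" where
  "leavitt_irred G R \<longleftrightarrow> leavitt_rep G R \<and> (case R of (V, P, S, S') \<Rightarrow>
     (\<exists>v\<in>verts G. \<exists>x\<in>V. P v x \<noteq> (\<lambda>_. 0))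
   \<and> (\<forall>W. leavitt_invariant G R W \<longrightarrow> W = {\<lambda>_. 0} \<or> W = V))"

definition alg_equiv :: "('v, 'e) graph \<Rightarrow> ('a, 'k::field, 'v, 'e) lrep \<Rightarrow> ('a, 'k, 'v, 'e) lrep \<Rightarrow> bool" where
  "alg_equiv G R1 R2 \<longleftrightarrow> (case R1 of (V, P, S, S') \<Rightarrow> case R2 of (W, Q, T, T') \<Rightarrow>
     (\<exists>U. klinear_on V U \<and> bij_betw U V W
        \<and> (\<forall>v\<in>verts G. \<forall>x\<in>V. U (P v x) = Q v (U x))
        \<and> (\<forall>e\<in>edges G. \<forall>x\<in>V. U (S e x) = T e (U x) \<and> U (S' e x) = T' e (U x))))"

definition leavitt_irred_classes :: "('v, 'e) graph \<Rightarrow> ('a, 'k::field, 'v, 'e) lrep set set" where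
  "leavitt_irred_classes G = {R. leavitt_irred G R} //
     {(R1, R2). leavitt_irred G R1 \<and> leavitt_irred G R2 \<and> alg_equiv G R1 R2}"

text \<open>Hilbert spaces are realised as closed subspaces of l2('a). A *-representation of
  C*(E) is, by the universal property, a Cuntz--Krieger E-family of bounded operators.\<close>

definition l2space :: "('a \<Rightarrow> complex) set" where
  "l2space = {f. (\<lambda>x. (cmod (f x))\<^sup>2) summable_on UNIV}"

definition l2inner :: "('a \<Rightarrow> complex) \<Rightarrow> ('a \<Rightarrow> complex) \<Rightarrow> complex" where
  "l2inner f g = (\<Sum>\<^sub>\<infinity>x. f x * cnj (g x))"

definition l2norm :: "('a \<Rightarrow> complex) \<Rightarrow> real" where
  "l2norm f = sqrt (\<Sum>\<^sub>\<infinity>x. (cmod (f x))\<^sup>2)"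

definition hilbert_subspace :: "('a \<Rightarrow> complex) set \<Rightarrow> bool" where
  "hilbert_subspace H \<longleftrightarrow> H \<subseteq> l2space \<and> ksubspace H
     \<and> (\<forall>X g. (\<forall>n. X n \<in> H) \<longrightarrow> g \<in> l2space \<longrightarrow>
           (\<lambda>n. l2norm (\<lambda>x. X n x - g x)) \<longlonglongrightarrow> 0 \<longrightarrow> g \<in> H)"

definition bounded_op :: "('a \<Rightarrow> complex) set \<Rightarrow> (('a \<Rightarrow> complex) \<Rightarrow> ('a \<Rightarrow> complex)) \<Rightarrow> bool" where
  "bounded_op H T \<longleftrightarrow> kop H T \<and> (\<exists>C. \<forall>f\<in>H. l2norm (T f) \<le> C * l2norm f)"

definition is_adjoint :: "('a \<Rightarrow> complex) set \<Rightarrow> (('a \<Rightarrow> complex) \<Rightarrow> ('a \<Rightarrow> complex))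
    \<Rightarrow> (('a \<Rightarrow> complex) \<Rightarrow> ('a \<Rightarrow> complex)) \<Rightarrow> bool" where
  "is_adjoint H T T' \<longleftrightarrow> (\<forall>f\<in>H. \<forall>g\<in>H. l2inner (T f) g = l2inner f (T' g))"

definition op_le :: "('a \<Rightarrow> complex) set \<Rightarrow> (('a \<Rightarrow> complex) \<Rightarrow> ('a \<Rightarrow> complex))
    \<Rightarrow> (('a \<Rightarrow> complex) \<Rightarrow> ('a \<Rightarrow> complex)) \<Rightarrow> bool" where
  "op_le H A B \<longleftrightarrow> (\<forall>f\<in>H. Im (l2inner (\<lambda>x. B f x - A f x) f) = 0
                         \<and> Re (l2inner (\<lambda>x. B f x - A f x) f) \<ge> 0)"

type_synonym ('a, 'v, 'e) crep = "('a, complex, 'v, 'e) lrep"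

definition cstar_rep :: "('v, 'e) graph \<Rightarrow> ('a, 'v, 'e) crep \<Rightarrow> bool" where
  "cstar_rep G R \<longleftrightarrow> (case R of (H, P, S, S') \<Rightarrow>
     hilbert_subspace H
   \<and> (\<forall>v\<in>verts G. bounded_op H (P v))
   \<and> (\<forall>e\<in>edges G. bounded_op H (S e) \<and> bounded_op H (S' e) \<and> is_adjoint H (S e) (S' e))
   \<and> (\<forall>v\<in>verts G. is_adjoint H (P v) (P v) \<and> (\<forall>f\<in>H. P v (P v f) = P v f))
   \<and> (\<forall>v\<in>verts G. \<forall>w\<in>verts G. v \<noteq> w \<longrightarrow> (\<forall>f\<in>H. P v (P w f) = (\<lambda>_. 0)))
   \<and> (\<forall>e\<in>edges G. \<forall>f\<in>edges G. e \<noteq> f \<longrightarrow> (\<forall>x\<in>H. S' e (S f x) = (\<lambda>_. 0)))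
   \<and> (\<forall>e\<in>edges G. \<forall>x\<in>H. S' e (S e x) = P (rng G e) x)
   \<and> (\<forall>e\<in>edges G. op_le H (\<lambda>x. S e (S' e x)) (P (src G e)))
   \<and> (\<forall>v. regular G v \<longrightarrow> (\<forall>x\<in>H. P v x = (\<lambda>i. \<Sum>e\<in>emits G v. S e (S' e x) i))))"

definition cstar_invariant :: "('v, 'e) graph \<Rightarrow> ('a, 'v, 'e) crep \<Rightarrow> ('a \<Rightarrow> complex) set \<Rightarrow> bool" where
  "cstar_invariant G R K \<longleftrightarrow> hilbert_subspace K \<and> leavitt_invariant G R K"

definition cstar_irred :: "('v, 'e) graph \<Rightarrow> ('a, 'v, 'e) crep \<Rightarrow> bool" where
  "cstar_irred G R \<longleftrightarrow> cstar_rep G R \<and> (case R of (H, P, S, S') \<Rightarrow>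
     (\<exists>v\<in>verts G. \<exists>x\<in>H. P v x \<noteq> (\<lambda>_. 0))
   \<and> (\<forall>K. cstar_invariant G R K \<longrightarrow> K = {\<lambda>_. 0} \<or> K = H))"

definition unitary_equiv :: "('v, 'e) graph \<Rightarrow> ('a, 'v, 'e) crep \<Rightarrow> ('a, 'v, 'e) crep \<Rightarrow> bool" where
  "unitary_equiv G R1 R2 \<longleftrightarrow> (case R1 of (H, P, S, S') \<Rightarrow> case R2 of (K, Q, T, T') \<Rightarrow>
     (\<exists>U. klinear_on H U \<and> bij_betw U H K
        \<and> (\<forall>f\<in>H. \<forall>g\<in>H. l2inner (U f) (U g) = l2inner f g)
        \<and> (\<forall>v\<in>verts G. \<forall>x\<in>H. U (P v x) = Q v (U x))
        \<and> (\<forall>e\<in>edges G. \<forall>x\<in>H. U (S e x) = T e (U x) \<and> U (S' e x) = T' e (U x))))"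

definition cstar_irred_classes :: "('v, 'e) graph \<Rightarrow> ('a, 'v, 'e) crep set set" where
  "cstar_irred_classes G = {R. cstar_irred G R} //
     {(R1, R2). cstar_irred G R1 \<and> cstar_irred G R2 \<and> unitary_equiv G R1 R2}"

end

theory Submission
  imports Defs
begin

text \<open>For a shift-tail class \<open>C\<close> of boundary paths, \<open>L\<^sub>k(E)\<close> and \<open>C\<^sup>*(E)\<close> act on the
  finitely supported, resp. square-summable, functions on \<open>C\<close>: \<open>p\<^sub>v\<close> keeps the point masses
  \<open>\<delta>\<^sub>\<beta>\<close> of the paths starting at \<open>v\<close>, \<open>s\<^sub>e\<close> prepends \<open>e\<close> and \<open>s\<^sub>e\<^sup>*\<close> removes it again.
  Products of the elements \<open>s\<^sub>\<mu> (p\<^sub>w - \<Sum>\<^bsub>e\<in>F\<^esub> s\<^sub>e s\<^sub>e\<^sup>*) s\<^sub>\<mu>\<^sup>*\<close> act as multiplication by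
  0/1-valued functions, and these separate any boundary path from finitely many others.
  Hence every nonzero invariant subspace contains a point mass (for \<open>C\<^sup>*(E)\<close> after an
  approximation in \<open>l\<^sup>2\<close>); since \<open>s\<^sub>e\<close> and \<open>s\<^sub>e\<^sup>*\<close> move point masses along shift-tail
  equivalence, it contains all of them, so the representation is irreducible. An intertwiner
  commutes with the separating multiplications, so it maps \<open>\<delta>\<^sub>\<alpha>\<close> to a multiple of
  \<open>\<delta>\<^sub>\<alpha>\<close>: the representations of different classes are inequivalent.\<close>

fun path_src :: "('v, 'e) graph \<Rightarrow> ('v, 'e) path \<Rightarrow> 'v" where
  "path_src G (PVert v) = v"
| "path_src G (PFin es) = src G (hd es)"
| "path_src G (PInf f) = src G (f 0)"

fun first_edge :: "('v, 'e) path \<Rightarrow> 'e option" where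
  "first_edge (PVert v) = None"
| "first_edge (PFin []) = None"
| "first_edge (PFin (e # es)) = Some e"
| "first_edge (PInf f) = Some (f 0)"

fun edge_cons :: "'e \<Rightarrow> ('v, 'e) path \<Rightarrow> ('v, 'e) path" where
  "edge_cons e (PVert v) = PFin [e]"
| "edge_cons e (PFin es) = PFin (e # es)"
| "edge_cons e (PInf f) = PInf (case_nat e f)"

lemma path_src_edge_cons [simp]: "path_src G (edge_cons e \<beta>) = src G e"
  by (cases \<beta>) auto

lemma first_edge_edge_cons [simp]: "first_edge (edge_cons e \<beta>) = Some e"
  by (cases \<beta>) auto

lemma edge_cons_shift:
  assumes "first_edge \<beta> = Some e"
  shows "edge_cons e (shift G \<beta>) = \<beta>"
proof (cases \<beta>)
  case (PFin es)
  with assms obtain fs where "es = e # fs"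
    by (cases es) auto
  with PFin show ?thesis
    by (cases fs) auto
next
  case (PInf f)
  with assms show ?thesis
    by (auto simp: fun_eq_iff split: nat.split)
qed (use assms in auto)

lemma shift_edge_cons:
  assumes "\<beta> \<noteq> PFin []" "path_src G \<beta> = rng G e"
  shows "shift G (edge_cons e \<beta>) = \<beta>"
  using assms by (cases \<beta> rule: first_edge.cases) auto

lemma boundaryE:
  assumes "\<beta> \<in> boundary G"
  obtains v where "\<beta> = PVert v" "v \<in> verts G" "singular G v"
  | es where "\<beta> = PFin es" "fin_path G es" "singular G (rng G (last es))"
  | f where "\<beta> = PInf f" "inf_path G f"
  using assms unfolding boundary_def by blast

lemma PFin_Nil_notin_boundary: "PFin [] \<notin> boundary G"
  by (auto elim: boundaryE simp: fin_path_def)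

lemma path_src_in_verts:
  assumes "wf_graph G" "\<beta> \<in> boundary G"
  shows "path_src G \<beta> \<in> verts G"
  using assms(2)
proof (cases rule: boundaryE)
  case (2 es)
  then have "hd es \<in> edges G"
    by (auto simp: fin_path_def)
  with assms(1) 2 show ?thesis
    by (simp add: wf_graph_def)
qed (use assms in \<open>auto simp: inf_path_def wf_graph_def\<close>)

lemma boundary_first_edge:
  assumes "\<beta> \<in> boundary G" "first_edge \<beta> = Some e"
  shows "e \<in> edges G" "src G e = path_src G \<beta>" "path_src G (shift G \<beta>) = rng G e"
proof -
  have "e \<in> edges G \<and> src G e = path_src G \<beta> \<and> path_src G (shift G \<beta>) = rng G e"
    using assms(1)
  proof (cases rule: boundaryE)
    case (2 es)
    with assms(2) obtain fs where es: "es = e # fs"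
      by (cases es) auto
    show ?thesis
    proof (cases fs)
      case (Cons f gs)
      have "rng G (es ! 0) = src G (es ! Suc 0)"
        using 2 es Cons unfolding fin_path_def by auto
      with 2 es Cons show ?thesis
        by (simp add: fin_path_def)
    qed (use 2 es in \<open>simp add: fin_path_def\<close>)
  qed (use assms in \<open>auto simp: inf_path_def\<close>)
  then show "e \<in> edges G" "src G e = path_src G \<beta>" "path_src G (shift G \<beta>) = rng G e"
    by auto
qed

lemma boundary_no_first_edge:
  assumes "\<beta> \<in> boundary G" "first_edge \<beta> = None"
  shows "\<beta> = PVert (path_src G \<beta>)" "singular G (path_src G \<beta>)"
proof -
  have "\<beta> = PVert (path_src G \<beta>) \<and> singular G (path_src G \<beta>)"
    using assms(1)
  proof (cases rule: boundaryE)
    case (2 es)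
    with assms(2) show ?thesis
      by (cases es) (auto simp: fin_path_def)
  qed (use assms in auto)
  then show "\<beta> = PVert (path_src G \<beta>)" "singular G (path_src G \<beta>)"
    by auto
qed

lemma shift_in_boundary:
  assumes "wf_graph G" "\<beta> \<in> boundary G"
  shows "shift G \<beta> \<in> boundary G"
  using assms(2)
proof (cases rule: boundaryE)
  case (2 es)
  then obtain e fs where es: "es = e # fs"
    by (cases es) (auto simp: fin_path_def)
  show ?thesis
  proof (cases fs)
    case Nil
    with 2 es assms(1) have "rng G e \<in> verts G"
      by (auto simp: fin_path_def wf_graph_def)
    with 2 es Nil show ?thesis
      by (auto simp: boundary_def)
  next
    case (Cons f gs)
    with 2 es have "fin_path G fs"
      by (auto simp: fin_path_def)
    with 2 es Cons show ?thesis
      by (auto simp: boundary_def)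
  qed
qed (use assms in \<open>auto simp: boundary_def inf_path_def\<close>)

lemma funpow_shift_in_boundary:
  "wf_graph G \<Longrightarrow> \<beta> \<in> boundary G \<Longrightarrow> (shift G ^^ n) \<beta> \<in> boundary G"
  by (induction n) (auto simp: shift_in_boundary)

lemma edge_cons_in_boundary:
  assumes "\<beta> \<in> boundary G" "e \<in> edges G" "path_src G \<beta> = rng G e"
  shows "edge_cons e \<beta> \<in> boundary G"
  using assms(1)
proof (cases rule: boundaryE)
  case (2 es)
  with assms(2,3) have "fin_path G (e # es)"
    by (auto simp: fin_path_def nth_Cons' hd_conv_nth)
  with 2 show ?thesis
    by (auto simp: boundary_def fin_path_def)
next
  case (3 f)
  with assms(2,3) have "inf_path G (case_nat e f)"
    by (auto simp: inf_path_def split: nat.split)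
  with 3 show ?thesis
    by (auto simp: boundary_def)
qed (use assms in \<open>auto simp: boundary_def fin_path_def\<close>)

fun has_prefix :: "('v, 'e) graph \<Rightarrow> 'e list \<Rightarrow> ('v, 'e) path \<Rightarrow> bool" where
  "has_prefix G [] \<beta> = True"
| "has_prefix G (e # es) \<beta> \<longleftrightarrow> first_edge \<beta> = Some e \<and> has_prefix G es (shift G \<beta>)"

lemma has_prefix_iff_nth:
  "has_prefix G es \<beta> \<longleftrightarrow> (\<forall>i<length es. first_edge ((shift G ^^ i) \<beta>) = Some (es ! i))"
proof (induction es arbitrary: \<beta>)
  case (Cons e es)
  then show ?case
    by (auto simp: funpow_swap1 nth_Cons' less_Suc_eq_0_disj)
qed simp

lemma has_prefix_inj:
  "has_prefix G es \<beta> \<Longrightarrow> has_prefix G es \<beta>' \<Longrightarrow> (shift G ^^ length es) \<beta> = (shift G ^^ length es) \<beta>'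
    \<Longrightarrow> \<beta> = \<beta>'"
proof (induction es arbitrary: \<beta> \<beta>')
  case (Cons e es)
  then have "shift G \<beta> = shift G \<beta>'"
    by (simp add: funpow_swap1)
  with Cons.prems show ?case
    by (metis edge_cons_shift has_prefix.simps(2))
qed simp

lemma funpow_shift_PInf: "(shift G ^^ i) (PInf g) = PInf (\<lambda>k. g (k + i))"
  by (induction i) auto

lemma has_prefix_PFin: "has_prefix G es (PFin es)"
proof (induction es)
  case (Cons e es)
  then show ?case
    by (cases es) auto
qed simp

lemma funpow_shift_PFin: "es \<noteq> [] \<Longrightarrow> (shift G ^^ length es) (PFin es) = PVert (rng G (last es))"
proof (induction es)
  case (Cons e es)
  then show ?case
    by (cases es) (auto simp: funpow_swap1)
qed simp

lemma exists_first_edge_ne: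
  assumes "\<beta> \<noteq> PInf g"
  shows "\<exists>i. first_edge ((shift G ^^ i) \<beta>) \<noteq> Some (g i)"
proof (cases \<beta>)
  case (PFin es)
  show ?thesis
  proof (cases "es = []")
    case False
    with PFin show ?thesis
      using funpow_shift_PFin[OF False, of G] by (metis first_edge.simps(1) option.distinct(1))
  qed (auto simp: PFin intro: exI[of _ 0])
next
  case (PInf h)
  with assms obtain i where "h i \<noteq> g i"
    by auto
  with PInf show ?thesis
    by (auto simp: funpow_shift_PInf)
qed (auto intro: exI[of _ 0])

definition shift_tail_rel :: "('v, 'e) graph \<Rightarrow> (('v, 'e) path \<times> ('v, 'e) path) set" where
  "shift_tail_rel G = {(\<alpha>, \<beta>). \<alpha> \<in> boundary G \<and> \<beta> \<in> boundary G \<and> shift_tail_equiv G \<alpha> \<beta>}"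

lemma shift_tail_classes_eq: "shift_tail_classes G = boundary G // shift_tail_rel G"
  by (simp add: shift_tail_classes_def shift_tail_rel_def)

lemma shift_tail_equiv_sym: "shift_tail_equiv G \<alpha> \<beta> \<Longrightarrow> shift_tail_equiv G \<beta> \<alpha>"
  unfolding shift_tail_equiv_def by metis

lemma shift_tail_equiv_trans:
  assumes "shift_tail_equiv G \<alpha> \<beta>" "shift_tail_equiv G \<beta> \<gamma>"
  shows "shift_tail_equiv G \<alpha> \<gamma>"
proof -
  obtain m n p q where mn: "(shift G ^^ m) \<alpha> = (shift G ^^ n) \<beta>"
    and pq: "(shift G ^^ p) \<beta> = (shift G ^^ q) \<gamma>"
    using assms unfolding shift_tail_equiv_def by blast
  have "(shift G ^^ (p + m)) \<alpha> = (shift G ^^ (n + p)) \<beta>"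
    by (simp add: funpow_add mn add.commute[of n p])
  also have "\<dots> = (shift G ^^ (n + q)) \<gamma>"
    by (simp add: funpow_add pq)
  finally show ?thesis
    unfolding shift_tail_equiv_def by blast
qed

lemma equiv_shift_tail_rel: "equiv (boundary G) (shift_tail_rel G)"
proof (rule equivI)
  show "refl_on (boundary G) (shift_tail_rel G)"
    by (auto simp: refl_on_def shift_tail_rel_def shift_tail_equiv_def)
  show "sym (shift_tail_rel G)"
    by (auto simp: sym_def shift_tail_rel_def intro: shift_tail_equiv_sym)
  show "trans (shift_tail_rel G)"
    by (auto simp: trans_def shift_tail_rel_def intro: shift_tail_equiv_trans)
qed (auto simp: shift_tail_rel_def)

locale shift_tail_class =
  fixes G :: "('v, 'e) graph" and C :: "('v, 'e) path set"
  assumes wf: "wf_graph G" and mem_classes: "C \<in> shift_tail_classes G"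
begin

lemma class_quotient: "C \<in> boundary G // shift_tail_rel G"
  using mem_classes by (simp add: shift_tail_classes_eq)

lemma subset_boundary: "C \<subseteq> boundary G"
  by (rule in_quotient_imp_subset[OF equiv_shift_tail_rel class_quotient])

lemma nonempty: "C \<noteq> {}"
  by (rule in_quotient_imp_non_empty[OF equiv_shift_tail_rel class_quotient])

lemma shift_tail_equiv_mem:
  assumes "\<alpha> \<in> C" "\<beta> \<in> C"
  shows "shift_tail_equiv G \<alpha> \<beta>"
proof -
  have "(\<alpha>, \<beta>) \<in> shift_tail_rel G"
    using assms by (intro in_quotient_imp_in_rel[OF equiv_shift_tail_rel class_quotient]) simp
  then show ?thesis
    by (simp add: shift_tail_rel_def)
qed

lemma mem_if_shift_tail_equiv:
  assumes "\<alpha> \<in> C" "\<beta> \<in> boundary G" "shift_tail_equiv G \<alpha> \<beta>"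
  shows "\<beta> \<in> C"
proof (rule in_quotient_imp_closed[OF equiv_shift_tail_rel class_quotient assms(1)])
  show "(\<alpha>, \<beta>) \<in> shift_tail_rel G"
    using assms subset_boundary by (auto simp: shift_tail_rel_def)
qed

lemma shift_mem:
  assumes "\<beta> \<in> C"
  shows "shift G \<beta> \<in> C"
proof (rule mem_if_shift_tail_equiv[OF assms])
  show "shift G \<beta> \<in> boundary G"
    using assms subset_boundary by (intro shift_in_boundary[OF wf]) blast
  have "(shift G ^^ 1) \<beta> = (shift G ^^ 0) (shift G \<beta>)"
    by simp
  then show "shift_tail_equiv G \<beta> (shift G \<beta>)"
    unfolding shift_tail_equiv_def by blast
qed

lemma shift_edge_cons_mem:
  assumes "\<beta> \<in> C" "path_src G \<beta> = rng G e"
  shows "shift G (edge_cons e \<beta>) = \<beta>"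
proof (rule shift_edge_cons[OF _ assms(2)])
  show "\<beta> \<noteq> PFin []"
    using assms(1) subset_boundary PFin_Nil_notin_boundary by blast
qed

lemma edge_cons_mem:
  assumes "\<beta> \<in> C" "e \<in> edges G" "path_src G \<beta> = rng G e"
  shows "edge_cons e \<beta> \<in> C"
proof (rule mem_if_shift_tail_equiv[OF assms(1)])
  show "edge_cons e \<beta> \<in> boundary G"
    using assms subset_boundary by (intro edge_cons_in_boundary) blast+
  have "(shift G ^^ 0) \<beta> = (shift G ^^ 1) (edge_cons e \<beta>)"
    using shift_edge_cons_mem[OF assms(1,3)] by simp
  then show "shift_tail_equiv G \<beta> (edge_cons e \<beta>)"
    unfolding shift_tail_equiv_def by blast
qed

lemma first_edge_mem:
  assumes "\<beta> \<in> C" "first_edge \<beta> = Some e"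
  shows "e \<in> edges G \<and> src G e = path_src G \<beta> \<and> path_src G (shift G \<beta>) = rng G e
    \<and> shift G \<beta> \<in> C \<and> edge_cons e (shift G \<beta>) = \<beta>"
proof -
  have "\<beta> \<in> boundary G"
    using assms(1) subset_boundary by blast
  from boundary_first_edge[OF this assms(2)] shift_mem[OF assms(1)] edge_cons_shift[OF assms(2)]
  show ?thesis
    by blast
qed

lemma shift_eq_if_no_first_edge:
  assumes "\<beta> \<in> C" "first_edge \<beta> = None"
  shows "shift G \<beta> = \<beta>"
proof -
  have "\<beta> = PVert (path_src G \<beta>)"
    using boundary_no_first_edge(1)[OF _ assms(2)] assms(1) subset_boundary by blast
  then show ?thesis
    by (metis shift.simps(1))
qed

end

lemma shift_tail_class_eqI:
  assumes "shift_tail_class G C" "shift_tail_class G D" "\<alpha> \<in> C" "\<alpha> \<in> D"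
  shows "C = D"
  using quotient_disj[OF equiv_shift_tail_rel shift_tail_class.class_quotient[OF assms(1)]
      shift_tail_class.class_quotient[OF assms(2)]] assms(3,4)
  by blast

lemma shift_tail_class_of:
  assumes "wf_graph G" "\<alpha> \<in> boundary G"
  shows "shift_tail_class G (shift_tail_rel G `` {\<alpha>})" "\<alpha> \<in> shift_tail_rel G `` {\<alpha>}"
proof -
  show "shift_tail_class G (shift_tail_rel G `` {\<alpha>})"
    unfolding shift_tail_class_def shift_tail_classes_eq using assms by (blast intro: quotientI)
  show "\<alpha> \<in> shift_tail_rel G `` {\<alpha>}"
    by (rule equiv_class_self[OF equiv_shift_tail_rel assms(2)])
qed

section \<open>Path representations\<close>

lemma support_on_UNIV_subset_iff: "support_on UNIV x \<subseteq> C \<longleftrightarrow> (\<forall>\<beta>. \<beta> \<notin> C \<longrightarrow> x \<beta> = 0)"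
  by (auto simp: support_on_def)

lemma ksubspace_zero: "ksubspace W \<Longrightarrow> (\<lambda>_. 0) \<in> W"
  by (simp add: ksubspace_def)

lemma ksubspace_add: "ksubspace W \<Longrightarrow> x \<in> W \<Longrightarrow> y \<in> W \<Longrightarrow> (\<lambda>i. x i + y i) \<in> W"
  by (simp add: ksubspace_def)

lemma ksubspace_scale: "ksubspace W \<Longrightarrow> x \<in> W \<Longrightarrow> (\<lambda>i. c * x i) \<in> W"
  by (simp add: ksubspace_def)

lemma ksubspace_scale_cancel:
  assumes "ksubspace W" "(\<lambda>i. c * x i) \<in> W" "c \<noteq> 0"
  shows "x \<in> W"
  using ksubspace_scale[OF assms(1,2), of "inverse c"] assms(3) by (simp add: mult.assoc[symmetric])

lemma ksubspace_diff:
  assumes "ksubspace W" "x \<in> W" "y \<in> W"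
  shows "(\<lambda>i. x i - y i) \<in> W"
  using ksubspace_add[OF assms(1,2) ksubspace_scale[OF assms(1,3), of "-1"]] by simp

lemma ksubspace_sum:
  assumes "ksubspace W" "finite S" "\<And>s. s \<in> S \<Longrightarrow> f s \<in> W"
  shows "(\<lambda>i. \<Sum>s\<in>S. c s * f s i) \<in> W"
  using assms(2,3)
proof (induction S rule: finite_induct)
  case empty
  then show ?case
    using ksubspace_zero[OF assms(1)] by simp
next
  case (insert s S)
  then have "(\<lambda>i. c s * f s i + (\<Sum>s\<in>S. c s * f s i)) \<in> W"
    by (intro ksubspace_add[OF assms(1)] ksubspace_scale[OF assms(1)]) auto
  with insert show ?case
    by simp
qed

lemma klinear_on_add: "klinear_on V U \<Longrightarrow> x \<in> V \<Longrightarrow> y \<in> V \<Longrightarrow> U (\<lambda>i. x i + y i) = (\<lambda>i. U x i + U y i)"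
  by (simp add: klinear_on_def)

lemma klinear_on_scale: "klinear_on V U \<Longrightarrow> x \<in> V \<Longrightarrow> U (\<lambda>i. c * x i) = (\<lambda>i. c * U x i)"
  by (simp add: klinear_on_def)

lemma klinear_on_diff:
  assumes "ksubspace V" "klinear_on V U" "x \<in> V" "y \<in> V"
  shows "U (\<lambda>i. x i - y i) = (\<lambda>i. U x i - U y i)"
proof -
  have "U (\<lambda>i. x i - y i) = U (\<lambda>i. x i + (\<lambda>i. (-1) * y i) i)"
    by simp
  also have "\<dots> = (\<lambda>i. U x i + U (\<lambda>i. (-1) * y i) i)"
    by (rule klinear_on_add[OF assms(2,3) ksubspace_scale[OF assms(1,4)]])
  also have "U (\<lambda>i. (-1) * y i) = (\<lambda>i. (-1) * U y i)"
    by (rule klinear_on_scale[OF assms(2,4)])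
  finally show ?thesis
    by simp
qed

definition proj_op :: "('v, 'e) graph \<Rightarrow> ('v, 'e) path set \<Rightarrow> 'v
    \<Rightarrow> (('v, 'e) path \<Rightarrow> 'k::zero) \<Rightarrow> ('v, 'e) path \<Rightarrow> 'k" where
  "proj_op G C v x = (\<lambda>\<beta>. if \<beta> \<in> C \<and> path_src G \<beta> = v then x \<beta> else 0)"

definition cons_op :: "('v, 'e) graph \<Rightarrow> ('v, 'e) path set \<Rightarrow> 'e
    \<Rightarrow> (('v, 'e) path \<Rightarrow> 'k::zero) \<Rightarrow> ('v, 'e) path \<Rightarrow> 'k" where
  "cons_op G C e x = (\<lambda>\<beta>. if \<beta> \<in> C \<and> first_edge \<beta> = Some e then x (shift G \<beta>) else 0)"

definition uncons_op :: "('v, 'e) graph \<Rightarrow> ('v, 'e) path set \<Rightarrow> 'e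
    \<Rightarrow> (('v, 'e) path \<Rightarrow> 'k::zero) \<Rightarrow> ('v, 'e) path \<Rightarrow> 'k" where
  "uncons_op G C e x = (\<lambda>\<beta>. if \<beta> \<in> C \<and> path_src G \<beta> = rng G e then x (edge_cons e \<beta>) else 0)"

definition path_rep :: "('v, 'e) graph \<Rightarrow> ('v, 'e) path set \<Rightarrow> (('v, 'e) path \<Rightarrow> 'k::zero) set
    \<Rightarrow> (('v, 'e) path, 'k, 'v, 'e) lrep" where
  "path_rep G C V = (V, proj_op G C, cons_op G C, uncons_op G C)"

lemma klinear_on_proj_op: "klinear_on V (proj_op G C v)"
  by (auto simp: klinear_on_def proj_op_def fun_eq_iff)

lemma klinear_on_cons_op: "klinear_on V (cons_op G C e)"
  by (auto simp: klinear_on_def cons_op_def fun_eq_iff)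

lemma klinear_on_uncons_op: "klinear_on V (uncons_op G C e)"
  by (auto simp: klinear_on_def uncons_op_def fun_eq_iff)

lemma proj_op_proj_op: "proj_op G C v (proj_op G C w x) = (if v = w then proj_op G C v x else (\<lambda>_. 0))"
  by (auto simp: proj_op_def fun_eq_iff)

lemma proj_op_uncons_op: "proj_op G C (rng G e) (uncons_op G C e x) = uncons_op G C e x"
  by (auto simp: proj_op_def uncons_op_def fun_eq_iff)

context shift_tail_class
begin

lemma proj_op_cons_op: "proj_op G C (src G e) (cons_op G C e x) = cons_op G C e x"
  by (auto simp: proj_op_def cons_op_def fun_eq_iff dest: first_edge_mem)

lemma cons_op_proj_op: "cons_op G C e (proj_op G C (rng G e) x) = cons_op G C e x"
  by (auto simp: proj_op_def cons_op_def fun_eq_iff dest: first_edge_mem)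

lemma uncons_op_proj_op: "e \<in> edges G \<Longrightarrow> uncons_op G C e (proj_op G C (src G e) x) = uncons_op G C e x"
  by (auto simp: proj_op_def uncons_op_def fun_eq_iff intro: edge_cons_mem)

lemma uncons_op_cons_op:
  "e \<in> edges G \<Longrightarrow> uncons_op G C e (cons_op G C f x) = (if e = f then proj_op G C (rng G e) x else (\<lambda>_. 0))"
  by (auto simp: proj_op_def uncons_op_def cons_op_def fun_eq_iff shift_edge_cons_mem intro: edge_cons_mem)

lemma cons_op_uncons_op:
  "cons_op G C e (uncons_op G C e x) = (\<lambda>\<beta>. if \<beta> \<in> C \<and> first_edge \<beta> = Some e then x \<beta> else 0)"
  by (auto simp: uncons_op_def cons_op_def fun_eq_iff dest: first_edge_mem)

lemma proj_op_eq_sum: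
  assumes "regular G v"
  shows "proj_op G C v x = (\<lambda>\<beta>. \<Sum>e\<in>emits G v. cons_op G C e (uncons_op G C e x) \<beta>)"
proof
  fix \<beta>
  have fin: "finite (emits G v)"
    using assms by (auto simp: regular_def singular_def)
  show "proj_op G C v x \<beta> = (\<Sum>e\<in>emits G v. cons_op G C e (uncons_op G C e x) \<beta>)"
  proof (cases "\<beta> \<in> C")
    case True
    show ?thesis
    proof (cases "first_edge \<beta>")
      case None
      have "singular G (path_src G \<beta>)"
        using boundary_no_first_edge(2)[OF _ None] True subset_boundary by blast
      with assms have "path_src G \<beta> \<noteq> v"
        by (auto simp: regular_def)
      with None show ?thesis
        by (simp add: cons_op_uncons_op proj_op_def)
    next
      case (Some e0)
      have "(\<Sum>e\<in>emits G v. cons_op G C e (uncons_op G C e x) \<beta>) = (\<Sum>e\<in>emits G v. if e0 = e then x \<beta> else 0)"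
        using Some True by (intro sum.cong) (auto simp: cons_op_uncons_op)
      also have "\<dots> = (if e0 \<in> emits G v then x \<beta> else 0)"
        using fin by simp
      also have "\<dots> = proj_op G C v x \<beta>"
        using first_edge_mem[OF True Some] True by (auto simp: emits_def proj_op_def)
      finally show ?thesis
        by simp
    qed
  qed (simp add: cons_op_uncons_op proj_op_def)
qed

lemma leavitt_rep_path_rep:
  assumes "leavitt_invariant G (path_rep G C V) V"
  shows "leavitt_rep G (path_rep G C V :: (_, 'k::field, _, _) lrep)"
  using assms
  by (auto simp: leavitt_rep_def leavitt_invariant_def path_rep_def kop_def
      klinear_on_proj_op klinear_on_cons_op klinear_on_uncons_op proj_op_proj_op
      proj_op_cons_op cons_op_proj_op proj_op_uncons_op uncons_op_proj_op uncons_op_cons_op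
      proj_op_eq_sum)

end

lemma leavitt_invariant_path_rep_iff:
  "leavitt_invariant G (path_rep G C V) W \<longleftrightarrow> ksubspace W \<and> W \<subseteq> V
    \<and> (\<forall>v\<in>verts G. \<forall>x\<in>W. proj_op G C v x \<in> W)
    \<and> (\<forall>e\<in>edges G. \<forall>x\<in>W. cons_op G C e x \<in> W \<and> uncons_op G C e x \<in> W)"
  by (auto simp: leavitt_invariant_def path_rep_def image_subset_iff)

section \<open>Algebraic multipliers\<close>

definition mult_by :: "('a \<Rightarrow> 'k::times) \<Rightarrow> ('a \<Rightarrow> 'k) \<Rightarrow> 'a \<Rightarrow> 'k" where
  "mult_by m x = (\<lambda>\<beta>. m \<beta> * x \<beta>)"

text \<open>Multipliers through which every path representation acts by an element of the algebra:
  the vertex rule is \<open>p\<^sub>v\<close>, and the \<open>cons\<close> rule is \<open>x \<mapsto> s\<^sub>e (m \<cdot> s\<^sub>e\<^sup>* x)\<close>.\<close>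

inductive algebraic_multiplier :: "('v, 'e) graph \<Rightarrow> (('v, 'e) path \<Rightarrow> 'k::field) \<Rightarrow> bool"
  for G where
  one: "algebraic_multiplier G (\<lambda>_. 1)"
| vertex: "v \<in> verts G \<Longrightarrow> algebraic_multiplier G (\<lambda>\<beta>. if path_src G \<beta> = v then 1 else 0)"
| cons: "algebraic_multiplier G m \<Longrightarrow> e \<in> edges G \<Longrightarrow>
    algebraic_multiplier G (\<lambda>\<beta>. if first_edge \<beta> = Some e then m (shift G \<beta>) else 0)"
| times: "algebraic_multiplier G m1 \<Longrightarrow> algebraic_multiplier G m2 \<Longrightarrow>
    algebraic_multiplier G (\<lambda>\<beta>. m1 \<beta> * m2 \<beta>)"
| diff: "algebraic_multiplier G m1 \<Longrightarrow> algebraic_multiplier G m2 \<Longrightarrow>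
    algebraic_multiplier G (\<lambda>\<beta>. m1 \<beta> - m2 \<beta>)"

fun cylinder_mult :: "('v, 'e) graph \<Rightarrow> 'e list \<Rightarrow> (('v, 'e) path \<Rightarrow> 'k::zero) \<Rightarrow> ('v, 'e) path \<Rightarrow> 'k"
  where
  "cylinder_mult G [] m = m"
| "cylinder_mult G (e # es) m =
     (\<lambda>\<beta>. if first_edge \<beta> = Some e then cylinder_mult G es m (shift G \<beta>) else 0)"

lemma cylinder_mult_eq:
  "cylinder_mult G es m \<beta> = (if has_prefix G es \<beta> then m ((shift G ^^ length es) \<beta>) else 0)"
  by (induction es arbitrary: \<beta>) (auto simp: funpow_swap1)

lemma algebraic_multiplier_cylinder_mult:
  "algebraic_multiplier G m \<Longrightarrow> set es \<subseteq> edges G \<Longrightarrow> algebraic_multiplier G (cylinder_mult G es m)"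
  by (induction es) (auto intro: algebraic_multiplier.cons)

lemma algebraic_multiplier_prod:
  "finite S \<Longrightarrow> (\<And>s. s \<in> S \<Longrightarrow> algebraic_multiplier G (M s))
    \<Longrightarrow> algebraic_multiplier G (\<lambda>\<beta>. \<Prod>s\<in>S. M s \<beta>)"
  by (induction S rule: finite_induct) (auto intro: algebraic_multiplier.intros)

lemma prod_zero_or_one:
  fixes f :: "'a \<Rightarrow> 'b::comm_semiring_1"
  shows "finite S \<Longrightarrow> (\<And>s. s \<in> S \<Longrightarrow> f s = 0 \<or> f s = 1) \<Longrightarrow> prod f S = 0 \<or> prod f S = 1"
proof (induction S rule: finite_induct)
  case (insert s S)
  have "f s = 0 \<or> f s = 1"
    using insert.prems by blast
  moreover have "prod f S = 0 \<or> prod f S = 1"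
    using insert.IH insert.prems by blast
  ultimately show ?case
    using insert.hyps by auto
qed simp

lemma algebraic_multiplier_avoiding:
  assumes "finite F" "F \<subseteq> edges G" "w \<in> verts G"
  shows "algebraic_multiplier G
    (\<lambda>\<beta>. if path_src G \<beta> = w \<and> first_edge \<beta> \<notin> Some ` F then (1::'k::field) else 0)"
  using assms(1,2)
proof (induction F rule: finite_induct)
  case empty
  then show ?case
    using algebraic_multiplier.vertex[OF assms(3)] by simp
next
  case (insert e F)
  have "algebraic_multiplier G (\<lambda>\<beta>. if first_edge \<beta> = Some e then (\<lambda>_. 1::'k) (shift G \<beta>) else 0)"
    using insert by (intro algebraic_multiplier.cons algebraic_multiplier.one) simp
  then have "algebraic_multiplier G (\<lambda>\<beta>. 1 - (if first_edge \<beta> = Some e then (1::'k) else 0))"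
    by (rule algebraic_multiplier.diff[OF algebraic_multiplier.one])
  with insert have "algebraic_multiplier G (\<lambda>\<beta>.
      (if path_src G \<beta> = w \<and> first_edge \<beta> \<notin> Some ` F then (1::'k) else 0)
      * (1 - (if first_edge \<beta> = Some e then 1 else 0)))"
    by (intro algebraic_multiplier.times) auto
  also have "(\<lambda>\<beta>. (if path_src G \<beta> = w \<and> first_edge \<beta> \<notin> Some ` F then (1::'k) else 0)
      * (1 - (if first_edge \<beta> = Some e then 1 else 0)))
    = (\<lambda>\<beta>. if path_src G \<beta> = w \<and> first_edge \<beta> \<notin> Some ` insert e F then 1 else 0)"
    by (auto simp: fun_eq_iff)
  finally show ?case .
qed

lemma range_cylinder_mult: "range m \<subseteq> {0, 1} \<Longrightarrow> range (cylinder_mult G es m) \<subseteq> {0, 1}"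
  by (auto simp: cylinder_mult_eq)

lemma separating_multiplier_PInf:
  assumes "inf_path G g" "\<beta> \<noteq> PInf g"
  obtains m :: "('v, 'e) path \<Rightarrow> 'k::field"
  where "algebraic_multiplier G m" "m (PInf g) = 1" "m \<beta> = 0" "range m \<subseteq> {0, 1}"
proof -
  obtain i where i: "first_edge ((shift G ^^ i) \<beta>) \<noteq> Some (g i)"
    using exists_first_edge_ne[OF assms(2)] by blast
  define es where "es = map g [0..<Suc i]"
  define m where "m = cylinder_mult G es (\<lambda>_. 1::'k)"
  have "set es \<subseteq> edges G"
    using assms(1) by (auto simp: es_def inf_path_def)
  then have "algebraic_multiplier G m"
    unfolding m_def by (rule algebraic_multiplier_cylinder_mult[OF algebraic_multiplier.one])
  moreover have "m (PInf g) = 1"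
    by (simp add: m_def cylinder_mult_eq has_prefix_iff_nth es_def funpow_shift_PInf del: upt_Suc)
  moreover have "i < length es" "es ! i = g i"
    by (simp_all add: es_def del: upt_Suc)
  then have "\<not> has_prefix G es \<beta>"
    using i unfolding has_prefix_iff_nth by metis
  then have "m \<beta> = 0"
    by (simp add: m_def cylinder_mult_eq)
  moreover have "range m \<subseteq> {0, 1}"
    unfolding m_def by (rule range_cylinder_mult) auto
  ultimately show thesis
    by (rule that)
qed

lemma boundary_vertex_end:
  assumes "wf_graph G" "\<alpha> \<in> boundary G" "\<And>g. \<alpha> \<noteq> PInf g"
  obtains es w where "has_prefix G es \<alpha>" "(shift G ^^ length es) \<alpha> = PVert w"
    "set es \<subseteq> edges G" "w \<in> verts G"
  using assms(2)
proof (cases rule: boundaryE)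
  case (1 v)
  then show thesis
    using that[of "[]" v] by simp
next
  case (2 fs)
  then have "fs \<noteq> []" "set fs \<subseteq> edges G"
    by (auto simp: fin_path_def)
  then have "last fs \<in> edges G"
    by auto
  with assms(1) have "rng G (last fs) \<in> verts G"
    by (simp add: wf_graph_def)
  show thesis
  proof (rule that)
    show "has_prefix G fs \<alpha>"
      using 2 has_prefix_PFin by simp
    show "(shift G ^^ length fs) \<alpha> = PVert (rng G (last fs))"
      using 2 funpow_shift_PFin[OF \<open>fs \<noteq> []\<close>] by simp
  qed fact+
qed (use assms in blast)

lemma separating_multiplier_vertex_end:
  assumes "wf_graph G" "\<beta> \<in> boundary G" "\<beta> \<noteq> \<alpha>"
    and \<alpha>: "has_prefix G es \<alpha>" "(shift G ^^ length es) \<alpha> = PVert w" "set es \<subseteq> edges G" "w \<in> verts G"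
  obtains m :: "('v, 'e) path \<Rightarrow> 'k::field"
  where "algebraic_multiplier G m" "m \<alpha> = 1" "m \<beta> = 0" "range m \<subseteq> {0, 1}"
proof -
  define \<gamma> where "\<gamma> = (shift G ^^ length es) \<beta>"
  have \<gamma>: "\<gamma> \<in> boundary G"
    unfolding \<gamma>_def by (rule funpow_shift_in_boundary[OF assms(1,2)])
  \<comment> \<open>only finitely many edges can be cut off \<open>p\<^sub>w\<close>; one suffices: the edge by which
    \<open>\<beta>\<close> leaves \<open>w\<close>\<close>
  define F where "F = set_option (first_edge \<gamma>)"
  have "finite F"
    by (simp add: F_def)
  moreover have "F \<subseteq> edges G"
    using boundary_first_edge(1)[OF \<gamma>] by (auto simp: F_def)
  ultimately have alg0: "algebraic_multiplier G
      (\<lambda>\<delta>. if path_src G \<delta> = w \<and> first_edge \<delta> \<notin> Some ` F then 1::'k else 0)"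
    using \<alpha>(4) by (rule algebraic_multiplier_avoiding)
  define m0 where
    "m0 = (\<lambda>\<delta>. if path_src G \<delta> = w \<and> first_edge \<delta> \<notin> Some ` F then 1::'k else 0)"
  define m where "m = cylinder_mult G es m0"
  have "algebraic_multiplier G m"
    unfolding m_def m0_def by (rule algebraic_multiplier_cylinder_mult[OF alg0 \<alpha>(3)])
  moreover have "m \<alpha> = 1"
    using \<alpha>(1,2) by (simp add: m_def cylinder_mult_eq m0_def)
  moreover have "m0 \<gamma> = 0" if "has_prefix G es \<beta>"
  proof (cases "first_edge \<gamma>")
    case None
    have "\<gamma> \<noteq> PVert w"
      using has_prefix_inj[OF that \<alpha>(1)] \<alpha>(2) assms(3) unfolding \<gamma>_def by metis
    then have "path_src G \<gamma> \<noteq> w"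
      using boundary_no_first_edge(1)[OF \<gamma> None] by metis
    then show ?thesis
      by (simp add: m0_def)
  next
    case (Some e)
    then show ?thesis
      by (simp add: m0_def F_def)
  qed
  then have "m \<beta> = 0"
    unfolding m_def cylinder_mult_eq \<gamma>_def[symmetric] by simp
  moreover have "range m \<subseteq> {0, 1}"
    unfolding m_def by (rule range_cylinder_mult) (auto simp: m0_def)
  ultimately show thesis
    by (rule that)
qed

lemma separating_multiplier_pair:
  assumes "wf_graph G" "\<alpha> \<in> boundary G" "\<beta> \<in> boundary G" "\<beta> \<noteq> \<alpha>"
  obtains m :: "('v, 'e) path \<Rightarrow> 'k::field"
  where "algebraic_multiplier G m" "m \<alpha> = 1" "m \<beta> = 0" "range m \<subseteq> {0, 1}"
proof (cases "\<exists>g. \<alpha> = PInf g")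
  case True
  then obtain g where g: "\<alpha> = PInf g"
    by blast
  with assms(2) have "inf_path G g"
    by (auto elim: boundaryE)
  moreover have "\<beta> \<noteq> PInf g"
    using g assms(4) by simp
  ultimately obtain m :: "_ \<Rightarrow> 'k" where "algebraic_multiplier G m" "m (PInf g) = 1" "m \<beta> = 0"
    "range m \<subseteq> {0, 1}"
    by (rule separating_multiplier_PInf)
  with g show thesis
    by (intro that) simp_all
next
  case False
  then obtain es w where "has_prefix G es \<alpha>" "(shift G ^^ length es) \<alpha> = PVert w"
    "set es \<subseteq> edges G" "w \<in> verts G"
    using boundary_vertex_end[OF assms(1,2)] by blast
  then obtain m :: "_ \<Rightarrow> 'k" where "algebraic_multiplier G m" "m \<alpha> = 1" "m \<beta> = 0"
    "range m \<subseteq> {0, 1}"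
    by (rule separating_multiplier_vertex_end[OF assms(1,3,4)])
  then show thesis
    by (rule that)
qed

lemma separating_multiplier:
  assumes "wf_graph G" "\<alpha> \<in> boundary G" "finite T" "T \<subseteq> boundary G"
  obtains m :: "('v, 'e) path \<Rightarrow> 'k::field"
  where "algebraic_multiplier G m" "m \<alpha> = 1" "\<And>\<beta>. \<beta> \<in> T \<Longrightarrow> \<beta> \<noteq> \<alpha> \<Longrightarrow> m \<beta> = 0"
    "range m \<subseteq> {0, 1}"
proof -
  have "\<forall>\<beta>\<in>T - {\<alpha>}. \<exists>m :: _ \<Rightarrow> 'k.
      algebraic_multiplier G m \<and> m \<alpha> = 1 \<and> m \<beta> = 0 \<and> range m \<subseteq> {0, 1}"
  proof
    fix \<beta>
    assume "\<beta> \<in> T - {\<alpha>}"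
    with assms(4) have "\<beta> \<in> boundary G" "\<beta> \<noteq> \<alpha>"
      by auto
    then obtain m :: "_ \<Rightarrow> 'k" where "algebraic_multiplier G m" "m \<alpha> = 1" "m \<beta> = 0"
      "range m \<subseteq> {0, 1}"
      by (rule separating_multiplier_pair[OF assms(1,2)])
    then show "\<exists>m :: _ \<Rightarrow> 'k. algebraic_multiplier G m \<and> m \<alpha> = 1 \<and> m \<beta> = 0 \<and> range m \<subseteq> {0, 1}"
      by (intro exI[of _ m] conjI)
  qed
  then obtain M :: "_ \<Rightarrow> _ \<Rightarrow> 'k" where M: "\<forall>\<beta>\<in>T - {\<alpha>}.
      algebraic_multiplier G (M \<beta>) \<and> M \<beta> \<alpha> = 1 \<and> M \<beta> \<beta> = 0 \<and> range (M \<beta>) \<subseteq> {0, 1}"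
    by (rule exE[OF bchoice])
  then have M_alg: "\<And>\<beta>. \<beta> \<in> T - {\<alpha>} \<Longrightarrow> algebraic_multiplier G (M \<beta>)"
    and M_one: "\<And>\<beta>. \<beta> \<in> T - {\<alpha>} \<Longrightarrow> M \<beta> \<alpha> = 1"
    and M_zero: "\<And>\<beta>. \<beta> \<in> T - {\<alpha>} \<Longrightarrow> M \<beta> \<beta> = 0"
    and M_01: "\<And>\<beta> \<gamma>. \<beta> \<in> T - {\<alpha>} \<Longrightarrow> M \<beta> \<gamma> = 0 \<or> M \<beta> \<gamma> = 1"
    by (simp_all add: image_subset_iff)
  define m where "m = (\<lambda>\<gamma>. \<Prod>\<beta>\<in>T - {\<alpha>}. M \<beta> \<gamma>)"
  have fin: "finite (T - {\<alpha>})"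
    using assms(3) by blast
  have "algebraic_multiplier G m"
    unfolding m_def using fin M_alg by (rule algebraic_multiplier_prod)
  moreover have "m \<alpha> = 1"
    unfolding m_def by (rule prod.neutral) (use M_one in blast)
  moreover have "m \<beta> = 0" if "\<beta> \<in> T" "\<beta> \<noteq> \<alpha>" for \<beta>
    unfolding m_def by (rule prod_zero[OF fin]) (use that M_zero in blast)
  moreover have "m \<gamma> = 0 \<or> m \<gamma> = 1" for \<gamma>
    unfolding m_def using fin M_01 by (rule prod_zero_or_one)
  then have "range m \<subseteq> {0, 1}"
    by blast
  ultimately show thesis
    by (rule that)
qed

context shift_tail_class
begin

lemma mult_by_vertex:
  fixes x :: "('v, 'e) path \<Rightarrow> 'k::field"
  shows "support_on UNIV x \<subseteq> C \<Longrightarrow> mult_by (\<lambda>\<beta>. if path_src G \<beta> = v then 1 else 0) x = proj_op G C v x"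
  by (auto simp: mult_by_def proj_op_def support_on_UNIV_subset_iff fun_eq_iff)

lemma cons_op_mult_by_uncons_op:
  fixes x :: "('v, 'e) path \<Rightarrow> 'k::field"
  assumes "support_on UNIV x \<subseteq> C"
  shows "cons_op G C e (mult_by m (uncons_op G C e x))
    = mult_by (\<lambda>\<beta>. if first_edge \<beta> = Some e then m (shift G \<beta>) else 0) x"
proof
  fix \<beta>
  show "cons_op G C e (mult_by m (uncons_op G C e x)) \<beta>
      = mult_by (\<lambda>\<beta>. if first_edge \<beta> = Some e then m (shift G \<beta>) else 0) x \<beta>"
  proof (cases "\<beta> \<in> C \<and> first_edge \<beta> = Some e")
    case True
    with first_edge_mem show ?thesis
      by (simp add: cons_op_def uncons_op_def mult_by_def)
  next
    case False
    with assms show ?thesis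
      by (auto simp: cons_op_def mult_by_def support_on_UNIV_subset_iff)
  qed
qed

lemma mult_by_mem:
  fixes W :: "(('v, 'e) path \<Rightarrow> 'k::field) set"
  assumes "algebraic_multiplier G m" and inv: "leavitt_invariant G (path_rep G C V) W"
    and supp: "\<forall>y\<in>V. support_on UNIV y \<subseteq> C" and "x \<in> W"
  shows "mult_by m x \<in> W"
  using assms(1,4)
proof (induction arbitrary: x)
  case one
  then show ?case
    by (simp add: mult_by_def)
next
  case (vertex v)
  with inv supp show ?case
    by (auto simp: mult_by_vertex leavitt_invariant_path_rep_iff)
next
  case (cons m e)
  have "uncons_op G C e x \<in> W"
    using cons inv by (simp add: leavitt_invariant_path_rep_iff)
  then have "mult_by m (uncons_op G C e x) \<in> W"
    by (rule cons.IH)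
  then have "cons_op G C e (mult_by m (uncons_op G C e x)) \<in> W"
    using cons inv by (simp add: leavitt_invariant_path_rep_iff)
  moreover have "support_on UNIV x \<subseteq> C"
    using cons.prems inv supp by (auto simp: leavitt_invariant_path_rep_iff)
  ultimately show ?case
    by (simp add: cons_op_mult_by_uncons_op)
next
  case (times m1 m2)
  then have "mult_by m1 (mult_by m2 x) \<in> W"
    by blast
  then show ?case
    by (simp add: mult_by_def mult.assoc)
next
  case (diff m1 m2)
  with inv have "(\<lambda>i. mult_by m1 x i - mult_by m2 x i) \<in> W"
    by (intro ksubspace_diff) (auto simp: leavitt_invariant_path_rep_iff)
  then show ?case
    by (simp add: mult_by_def left_diff_distrib)
qed

end

context shift_tail_class
begin

lemma uncons_op_indicator:
  assumes "\<alpha> \<in> C" "first_edge \<alpha> = Some e"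
  shows "uncons_op G C e (indicator {\<alpha>}) = (indicator {shift G \<alpha>} :: _ \<Rightarrow> 'k::zero_neq_one)"
proof
  fix \<gamma>
  have "edge_cons e \<gamma> = \<alpha> \<longleftrightarrow> \<gamma> = shift G \<alpha>" if "\<gamma> \<in> C" "path_src G \<gamma> = rng G e"
    using shift_edge_cons_mem[OF that] first_edge_mem[OF assms] by auto
  then show "uncons_op G C e (indicator {\<alpha>}) \<gamma> = (indicator {shift G \<alpha>} \<gamma> :: 'k)"
    using first_edge_mem[OF assms] by (auto simp: uncons_op_def indicator_def)
qed

lemma cons_op_indicator:
  assumes "\<beta> \<in> C" "first_edge \<beta> = Some e"
  shows "cons_op G C e (indicator {shift G \<beta>}) = (indicator {\<beta>} :: _ \<Rightarrow> 'k::zero_neq_one)"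
proof
  fix \<gamma>
  have "shift G \<gamma> = shift G \<beta> \<longleftrightarrow> \<gamma> = \<beta>" if "\<gamma> \<in> C" "first_edge \<gamma> = Some e"
    using first_edge_mem[OF that] first_edge_mem[OF assms] by metis
  then show "cons_op G C e (indicator {shift G \<beta>}) \<gamma> = (indicator {\<beta>} \<gamma> :: 'k)"
    using assms by (auto simp: cons_op_def indicator_def)
qed

lemma indicator_shift_mem_iff:
  fixes W :: "(('v, 'e) path \<Rightarrow> 'k::field) set"
  assumes inv: "leavitt_invariant G (path_rep G C V) W" and "\<beta> \<in> C"
  shows "indicator {shift G \<beta>} \<in> W \<longleftrightarrow> indicator {\<beta>} \<in> W"
proof (cases "first_edge \<beta>")
  case None
  then show ?thesis
    using shift_eq_if_no_first_edge[OF \<open>\<beta> \<in> C\<close>] by simp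
next
  case (Some e)
  then have "e \<in> edges G"
    using first_edge_mem[OF \<open>\<beta> \<in> C\<close>] by blast
  with inv have closed: "\<forall>x\<in>W. cons_op G C e x \<in> W \<and> uncons_op G C e x \<in> W"
    by (simp add: leavitt_invariant_path_rep_iff)
  show ?thesis
  proof
    assume "indicator {shift G \<beta>} \<in> W"
    with closed have "cons_op G C e (indicator {shift G \<beta>}) \<in> W"
      by blast
    then show "indicator {\<beta>} \<in> W"
      by (simp add: cons_op_indicator[OF \<open>\<beta> \<in> C\<close> Some])
  next
    assume "indicator {\<beta>} \<in> W"
    with closed have "uncons_op G C e (indicator {\<beta>}) \<in> W"
      by blast
    then show "indicator {shift G \<beta>} \<in> W"
      by (simp add: uncons_op_indicator[OF \<open>\<beta> \<in> C\<close> Some])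
  qed
qed

lemma indicator_funpow_shift_mem_iff:
  fixes W :: "(('v, 'e) path \<Rightarrow> 'k::field) set"
  assumes "leavitt_invariant G (path_rep G C V) W" "\<beta> \<in> C"
  shows "indicator {(shift G ^^ n) \<beta>} \<in> W \<longleftrightarrow> indicator {\<beta>} \<in> W"
proof (induction n)
  case (Suc n)
  have "(shift G ^^ n) \<beta> \<in> C"
    using assms(2) by (induction n) (auto intro: shift_mem)
  with Suc show ?case
    using indicator_shift_mem_iff[OF assms(1)] by simp
qed simp

lemma indicator_mem_iff:
  fixes W :: "(('v, 'e) path \<Rightarrow> 'k::field) set"
  assumes "leavitt_invariant G (path_rep G C V) W" "\<alpha> \<in> C" "\<beta> \<in> C"
  shows "indicator {\<alpha>} \<in> W \<longleftrightarrow> indicator {\<beta>} \<in> W"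
proof -
  obtain m n where "(shift G ^^ m) \<alpha> = (shift G ^^ n) \<beta>"
    using shift_tail_equiv_mem[OF assms(2,3)] unfolding shift_tail_equiv_def by blast
  then show ?thesis
    using indicator_funpow_shift_mem_iff[OF assms(1,2), of m] indicator_funpow_shift_mem_iff[OF assms(1,3), of n]
    by simp
qed

lemma proj_op_indicator_ne_zero:
  assumes "\<alpha> \<in> C"
  shows "proj_op G C (path_src G \<alpha>) (indicator {\<alpha>}) \<noteq> (\<lambda>_. 0 :: 'k::zero_neq_one)"
proof -
  have "proj_op G C (path_src G \<alpha>) (indicator {\<alpha>}) \<alpha> = (1 :: 'k)"
    using assms by (simp add: proj_op_def)
  then show ?thesis
    by (metis zero_neq_one)
qed

end

definition path_intertwiner :: "('v, 'e) graph \<Rightarrow> ('v, 'e) path set \<Rightarrow> ('v, 'e) path set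
    \<Rightarrow> (('v, 'e) path \<Rightarrow> 'k::field) set \<Rightarrow> ((('v, 'e) path \<Rightarrow> 'k) \<Rightarrow> ('v, 'e) path \<Rightarrow> 'k) \<Rightarrow> bool" where
  "path_intertwiner G C1 C2 V U \<longleftrightarrow> klinear_on V U
     \<and> (\<forall>v\<in>verts G. \<forall>y\<in>V. U (proj_op G C1 v y) = proj_op G C2 v (U y))
     \<and> (\<forall>e\<in>edges G. \<forall>y\<in>V.
          U (cons_op G C1 e y) = cons_op G C2 e (U y) \<and> U (uncons_op G C1 e y) = uncons_op G C2 e (U y))"

lemma alg_equiv_path_rep_iff:
  "alg_equiv G (path_rep G C1 V1) (path_rep G C2 V2) \<longleftrightarrow>
    (\<exists>U. path_intertwiner G C1 C2 V1 U \<and> bij_betw U V1 V2)"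
  by (auto simp: alg_equiv_def path_rep_def path_intertwiner_def)

lemma intertwiner_mult_by:
  assumes C1: "shift_tail_class G C1" and C2: "shift_tail_class G C2"
    and "algebraic_multiplier G m"
    and inv: "leavitt_invariant G (path_rep G C1 V) V"
    and supp1: "\<forall>y\<in>V. support_on UNIV y \<subseteq> C1" and supp2: "\<forall>y\<in>V. support_on UNIV (U y) \<subseteq> C2"
    and U: "path_intertwiner G C1 C2 V U"
    and "x \<in> V"
  shows "U (mult_by m x) = mult_by m (U x)"
  using assms(3,8)
proof (induction arbitrary: x)
  case one
  then show ?case
    by (simp add: mult_by_def)
next
  case (vertex v)
  with U supp1 supp2 show ?case
    by (simp add: path_intertwiner_def shift_tail_class.mult_by_vertex[OF C1]
        shift_tail_class.mult_by_vertex[OF C2])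
next
  case (cons m e)
  have y: "uncons_op G C1 e x \<in> V"
    using cons inv by (simp add: leavitt_invariant_path_rep_iff)
  have my: "mult_by m (uncons_op G C1 e x) \<in> V"
    by (rule shift_tail_class.mult_by_mem[OF C1 cons.hyps(1) inv supp1 y])
  have "U (mult_by (\<lambda>\<beta>. if first_edge \<beta> = Some e then m (shift G \<beta>) else 0) x)
      = U (cons_op G C1 e (mult_by m (uncons_op G C1 e x)))"
    using supp1 cons.prems by (simp add: shift_tail_class.cons_op_mult_by_uncons_op[OF C1])
  also have "\<dots> = cons_op G C2 e (mult_by m (U (uncons_op G C1 e x)))"
    using U cons.hyps(2) cons.IH[OF y] my by (simp add: path_intertwiner_def)
  also have "\<dots> = cons_op G C2 e (mult_by m (uncons_op G C2 e (U x)))"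
    using U cons.hyps(2) cons.prems by (simp add: path_intertwiner_def)
  also have "\<dots> = mult_by (\<lambda>\<beta>. if first_edge \<beta> = Some e then m (shift G \<beta>) else 0) (U x)"
    using supp2 cons.prems by (simp add: shift_tail_class.cons_op_mult_by_uncons_op[OF C2])
  finally show ?case .
next
  case (times m1 m2)
  have "mult_by m2 x \<in> V"
    by (rule shift_tail_class.mult_by_mem[OF C1 times.hyps(2) inv supp1 times.prems])
  then have "U (mult_by m1 (mult_by m2 x)) = mult_by m1 (mult_by m2 (U x))"
    using times by simp
  then show ?case
    by (simp add: mult_by_def mult.assoc)
next
  case (diff m1 m2)
  have "ksubspace V" "klinear_on V U"
    using inv U by (simp_all add: leavitt_invariant_path_rep_iff path_intertwiner_def)
  moreover have "mult_by m1 x \<in> V" "mult_by m2 x \<in> V"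
    using shift_tail_class.mult_by_mem[OF C1 _ inv supp1 diff.prems] diff.hyps by blast+
  ultimately have "U (\<lambda>i. mult_by m1 x i - mult_by m2 x i) = (\<lambda>i. mult_by m1 (U x) i - mult_by m2 (U x) i)"
    using diff by (simp add: klinear_on_diff)
  then show ?case
    by (simp add: mult_by_def left_diff_distrib)
qed

lemma intertwiner_indicator_support:
  fixes U :: "(('v, 'e) path \<Rightarrow> 'k::field) \<Rightarrow> ('v, 'e) path \<Rightarrow> 'k"
  assumes C1: "shift_tail_class G C1" and C2: "shift_tail_class G C2"
    and inv: "leavitt_invariant G (path_rep G C1 V) V"
    and supp1: "\<forall>y\<in>V. support_on UNIV y \<subseteq> C1" and supp2: "\<forall>y\<in>V. support_on UNIV (U y) \<subseteq> C2"
    and U: "path_intertwiner G C1 C2 V U"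
    and \<alpha>: "\<alpha> \<in> C1" "indicator {\<alpha>} \<in> V"
  shows "support_on UNIV (U (indicator {\<alpha>})) \<subseteq> {\<alpha>}"
proof
  fix \<beta>
  assume \<beta>: "\<beta> \<in> support_on UNIV (U (indicator {\<alpha>}))"
  show "\<beta> \<in> {\<alpha>}"
  proof (rule ccontr)
    assume "\<beta> \<notin> {\<alpha>}"
    moreover have "\<alpha> \<in> boundary G" "\<beta> \<in> boundary G"
      using \<alpha> \<beta> supp2 shift_tail_class.subset_boundary[OF C1] shift_tail_class.subset_boundary[OF C2]
      by blast+
    ultimately obtain m :: "_ \<Rightarrow> 'k" where m: "algebraic_multiplier G m" "m \<alpha> = 1" "m \<beta> = 0"
      using separating_multiplier_pair[OF shift_tail_class.wf[OF C1]] by (metis singleton_iff)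
    have "mult_by m (indicator {\<alpha>}) = (indicator {\<alpha>} :: _ \<Rightarrow> 'k)"
      using m(2) by (auto simp: mult_by_def indicator_def)
    then have "U (indicator {\<alpha>}) = mult_by m (U (indicator {\<alpha>}))"
      using intertwiner_mult_by[OF C1 C2 m(1) inv supp1 supp2 U \<alpha>(2)] by simp
    then have "U (indicator {\<alpha>}) \<beta> = 0"
      using m(3) by (metis mult_by_def mult_zero_left)
    with \<beta> show False
      by (simp add: support_on_def)
  qed
qed

lemma path_rep_alg_equiv_imp_eq:
  assumes C1: "shift_tail_class G C1" and C2: "shift_tail_class G C2"
    and "alg_equiv G (path_rep G C1 V1) (path_rep G C2 V2 :: (_, 'k::field, _, _) lrep)"
    and inv: "leavitt_invariant G (path_rep G C1 V1) V1"
    and supp1: "\<forall>y\<in>V1. support_on UNIV y \<subseteq> C1" and supp2: "\<forall>y\<in>V2. support_on UNIV y \<subseteq> C2"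
    and \<alpha>: "\<alpha> \<in> C1" "indicator {\<alpha>} \<in> V1"
  shows "C1 = C2"
proof -
  obtain U where U: "path_intertwiner G C1 C2 V1 U" and bij: "bij_betw U V1 V2"
    using assms(3) by (auto simp: alg_equiv_path_rep_iff)
  have ksub: "ksubspace V1"
    using inv by (simp add: leavitt_invariant_path_rep_iff)
  have suppU: "\<forall>y\<in>V1. support_on UNIV (U y) \<subseteq> C2"
    using bij supp2 by (auto dest: bij_betwE)
  have "klinear_on V1 U"
    using U by (simp add: path_intertwiner_def)
  then have "U (\<lambda>_. 0) = (\<lambda>_. 0)"
    using klinear_on_diff[OF ksub _ ksubspace_zero[OF ksub] ksubspace_zero[OF ksub]] by simp
  moreover have "indicator {\<alpha>} \<noteq> (\<lambda>_. 0 :: 'k)"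
    by (metis indicator_simps(1) insertI1 zero_neq_one)
  ultimately have "U (indicator {\<alpha>}) \<noteq> (\<lambda>_. 0)"
    using bij \<alpha>(2) ksubspace_zero[OF ksub] unfolding bij_betw_def by (metis inj_onD)
  then have "support_on UNIV (U (indicator {\<alpha>})) \<noteq> {}"
    by (auto simp: support_on_def)
  moreover have "support_on UNIV (U (indicator {\<alpha>})) \<subseteq> {\<alpha>} \<inter> C2"
    using intertwiner_indicator_support[OF C1 C2 inv supp1 suppU U \<alpha>] suppU \<alpha>(2) by blast
  ultimately have "\<alpha> \<in> C2"
    by blast
  then show ?thesis
    by (rule shift_tail_class_eqI[OF C1 C2 \<alpha>(1)])
qed

section \<open>The Leavitt path algebra\<close>

definition fin_supp_space :: "'a set \<Rightarrow> ('a \<Rightarrow> 'k::field) set" where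
  "fin_supp_space C = {x. finite (support_on UNIV x) \<and> support_on UNIV x \<subseteq> C}"

lemma fin_supp_space_subset:
  assumes "x \<in> fin_supp_space C" "support_on UNIV y \<subseteq> support_on UNIV x"
  shows "y \<in> fin_supp_space C"
  using assms finite_subset by (auto simp: fin_supp_space_def)

lemma fin_supp_space_image:
  assumes "x \<in> fin_supp_space C" "support_on UNIV y \<subseteq> f ` support_on UNIV x" "support_on UNIV y \<subseteq> C"
  shows "y \<in> fin_supp_space C"
  using assms finite_surj by (auto simp: fin_supp_space_def)

lemma ksubspace_fin_supp_space: "ksubspace (fin_supp_space C :: (_ \<Rightarrow> 'k::field) set)"
  unfolding ksubspace_def
proof (intro conjI ballI allI)
  show "(\<lambda>_. 0) \<in> (fin_supp_space C :: (_ \<Rightarrow> 'k) set)"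
    by (simp add: fin_supp_space_def support_on_def)
next
  fix x y :: "_ \<Rightarrow> 'k"
  assume x: "x \<in> fin_supp_space C" and y: "y \<in> fin_supp_space C"
  have "support_on UNIV (\<lambda>i. x i + y i) \<subseteq> support_on UNIV x \<union> support_on UNIV y"
    by (auto simp: support_on_def)
  with x y show "(\<lambda>i. x i + y i) \<in> fin_supp_space C"
    unfolding fin_supp_space_def by (auto intro: finite_subset)
next
  fix c and x :: "_ \<Rightarrow> 'k"
  assume "x \<in> fin_supp_space C"
  then show "(\<lambda>i. c * x i) \<in> fin_supp_space C"
    by (rule fin_supp_space_subset) (auto simp: support_on_def)
qed

lemma indicator_in_fin_supp_space: "\<alpha> \<in> C \<Longrightarrow> indicator {\<alpha>} \<in> fin_supp_space C"
  by (simp add: fin_supp_space_def support_on_def indicator_def)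

lemma sum_indicator_eq:
  "finite S \<Longrightarrow> (\<lambda>i. \<Sum>\<beta>\<in>S. x \<beta> * indicator {\<beta>} i) = (\<lambda>i. if i \<in> S then x i else (0::'k::field))"
  by (auto simp: indicator_def if_distrib cong: if_cong)

lemma fin_supp_space_expand:
  assumes "x \<in> fin_supp_space C"
  shows "x = (\<lambda>i. \<Sum>\<beta>\<in>support_on UNIV x. x \<beta> * indicator {\<beta>} i)"
proof -
  have "finite (support_on UNIV x)"
    using assms by (simp add: fin_supp_space_def)
  then have "(\<lambda>i. \<Sum>\<beta>\<in>support_on UNIV x. x \<beta> * indicator {\<beta>} i)
      = (\<lambda>i. if i \<in> support_on UNIV x then x i else 0)"
    by (rule sum_indicator_eq)
  then show ?thesis
    by (auto simp: support_on_def fun_eq_iff)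
qed

context shift_tail_class
begin

lemma leavitt_invariant_fin_supp_space:
  "leavitt_invariant G (path_rep G C (fin_supp_space C)) (fin_supp_space C :: (_ \<Rightarrow> 'k::field) set)"
  unfolding leavitt_invariant_path_rep_iff
proof (intro conjI ballI ksubspace_fin_supp_space subset_refl)
  fix x :: "_ \<Rightarrow> 'k" and v e
  assume x: "x \<in> fin_supp_space C"
  have "support_on UNIV (proj_op G C v x) \<subseteq> support_on UNIV x"
    by (auto simp: support_on_def proj_op_def)
  with x show "proj_op G C v x \<in> fin_supp_space C"
    by (rule fin_supp_space_subset)
  have "support_on UNIV (cons_op G C e x) \<subseteq> edge_cons e ` support_on UNIV x"
  proof
    fix \<beta>
    assume "\<beta> \<in> support_on UNIV (cons_op G C e x)"
    then have "\<beta> \<in> C" "first_edge \<beta> = Some e" "x (shift G \<beta>) \<noteq> 0"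
      by (auto simp: support_on_def cons_op_def split: if_splits)
    then have "\<beta> = edge_cons e (shift G \<beta>)" "shift G \<beta> \<in> support_on UNIV x"
      using first_edge_mem by (auto simp: support_on_def)
    then show "\<beta> \<in> edge_cons e ` support_on UNIV x"
      by (rule image_eqI)
  qed
  with x show "cons_op G C e x \<in> fin_supp_space C"
    by (rule fin_supp_space_image) (auto simp: support_on_def cons_op_def)
  have "support_on UNIV (uncons_op G C e x) \<subseteq> shift G ` support_on UNIV x"
  proof
    fix \<beta>
    assume "\<beta> \<in> support_on UNIV (uncons_op G C e x)"
    then have "\<beta> \<in> C" "path_src G \<beta> = rng G e" "x (edge_cons e \<beta>) \<noteq> 0"
      by (auto simp: support_on_def uncons_op_def split: if_splits)
    then have "\<beta> = shift G (edge_cons e \<beta>)" "edge_cons e \<beta> \<in> support_on UNIV x"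
      using shift_edge_cons_mem by (auto simp: support_on_def)
    then show "\<beta> \<in> shift G ` support_on UNIV x"
      by (rule image_eqI)
  qed
  with x show "uncons_op G C e x \<in> fin_supp_space C"
    by (rule fin_supp_space_image) (auto simp: support_on_def uncons_op_def)
qed

lemma leavitt_rep_fin_supp_path_rep:
  "leavitt_rep G (path_rep G C (fin_supp_space C) :: (_, 'k::field, _, _) lrep)"
  by (rule leavitt_rep_path_rep[OF leavitt_invariant_fin_supp_space])

lemma indicator_mem_fin_supp_invariant:
  fixes W :: "(('v, 'e) path \<Rightarrow> 'k::field) set"
  assumes inv: "leavitt_invariant G (path_rep G C (fin_supp_space C)) W" and "x \<in> W" "x b \<noteq> 0"
  shows "indicator {b} \<in> W"
proof -
  have x: "finite (support_on UNIV x)" "support_on UNIV x \<subseteq> C"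
    using assms inv by (auto simp: leavitt_invariant_path_rep_iff fin_supp_space_def)
  then have b: "b \<in> boundary G" and sub: "support_on UNIV x \<subseteq> boundary G"
    using assms(3) subset_boundary by (auto simp: support_on_def)
  obtain m :: "_ \<Rightarrow> 'k" where m: "algebraic_multiplier G m" "m b = 1"
    "\<And>\<beta>. \<beta> \<in> support_on UNIV x \<Longrightarrow> \<beta> \<noteq> b \<Longrightarrow> m \<beta> = 0" "range m \<subseteq> {0, 1}"
    by (rule separating_multiplier[OF wf b x(1) sub]) blast
  have "mult_by m x \<in> W"
    by (rule mult_by_mem[OF m(1) inv _ \<open>x \<in> W\<close>]) (simp add: fin_supp_space_def)
  moreover have "mult_by m x = (\<lambda>i. x b * indicator {b} i)"
  proof
    fix i
    show "mult_by m x i = x b * indicator {b} i"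
      using m(2) m(3)[of i] by (cases "i = b") (auto simp: mult_by_def support_on_def)
  qed
  ultimately have "(\<lambda>i. x b * indicator {b} i) \<in> W"
    by simp
  with \<open>x b \<noteq> 0\<close> inv show ?thesis
    by (auto simp: leavitt_invariant_path_rep_iff intro: ksubspace_scale_cancel)
qed

lemma leavitt_irred_path_rep:
  "leavitt_irred G (path_rep G C (fin_supp_space C) :: (_, 'k::field, _, _) lrep)"
proof -
  obtain \<alpha> where \<alpha>: "\<alpha> \<in> C"
    using nonempty by blast
  have nonzero: "\<exists>v\<in>verts G. \<exists>x\<in>fin_supp_space C. proj_op G C v x \<noteq> (\<lambda>_. 0 :: 'k)"
    using path_src_in_verts[OF wf] \<alpha> subset_boundary indicator_in_fin_supp_space[OF \<alpha>]
      proj_op_indicator_ne_zero[OF \<alpha>] by blast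
  have "W = {\<lambda>_. 0} \<or> W = fin_supp_space C"
    if inv: "leavitt_invariant G (path_rep G C (fin_supp_space C)) W" for W :: "(_ \<Rightarrow> 'k) set"
  proof (cases "W = {\<lambda>_. 0}")
    case False
    moreover have ksub: "ksubspace W" and "W \<subseteq> fin_supp_space C"
      using inv by (simp_all add: leavitt_invariant_path_rep_iff)
    ultimately obtain x b where "x \<in> W" "x b \<noteq> 0"
      using ksubspace_zero[OF ksub] by blast
    then have "indicator {b} \<in> W" "b \<in> C"
      using indicator_mem_fin_supp_invariant[OF inv] \<open>W \<subseteq> fin_supp_space C\<close>
      by (auto simp: fin_supp_space_def support_on_def)
    then have all: "indicator {\<beta>} \<in> W" if "\<beta> \<in> C" for \<beta>
      using indicator_mem_iff[OF inv _ that] by blast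
    have "fin_supp_space C \<subseteq> W"
    proof
      fix y :: "_ \<Rightarrow> 'k"
      assume y: "y \<in> fin_supp_space C"
      then have "(\<lambda>i. \<Sum>\<beta>\<in>support_on UNIV y. y \<beta> * indicator {\<beta>} i) \<in> W"
        using all by (intro ksubspace_sum[OF ksub]) (auto simp: fin_supp_space_def)
      then show "y \<in> W"
        using fin_supp_space_expand[OF y] by simp
    qed
    with \<open>W \<subseteq> fin_supp_space C\<close> show ?thesis
      by blast
  qed simp
  with nonzero show ?thesis
    unfolding leavitt_irred_def using leavitt_rep_fin_supp_path_rep by (simp add: path_rep_def)
qed

end

section \<open>Square-summable functions\<close>

definition sq_mod :: "('a \<Rightarrow> complex) \<Rightarrow> 'a \<Rightarrow> real" where
  "sq_mod f = (\<lambda>x. (cmod (f x))\<^sup>2)"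

lemma sq_mod_nonneg [simp]: "0 \<le> sq_mod f x"
  by (simp add: sq_mod_def)

lemma l2space_iff: "f \<in> l2space \<longleftrightarrow> sq_mod f summable_on UNIV"
  by (simp add: l2space_def sq_mod_def)

lemma l2norm_eq: "l2norm f = sqrt (infsum (sq_mod f) UNIV)"
  by (simp add: l2norm_def sq_mod_def)

lemma summable_on_dominated:
  fixes f g :: "'a \<Rightarrow> real"
  assumes "\<And>x. 0 \<le> f x" "\<And>x. f x \<le> g x" "g summable_on UNIV"
  shows "f summable_on UNIV" "infsum f UNIV \<le> infsum g UNIV"
proof -
  show f: "f summable_on UNIV"
    using summable_on_comparison_test[OF assms(3)] assms(1,2) by blast
  show "infsum f UNIV \<le> infsum g UNIV"
    using infsum_mono[OF f assms(3)] assms(2) by blast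
qed

lemma l2space_dominated:
  assumes "g \<in> l2space" "\<And>x. cmod (f x) \<le> cmod (g x)"
  shows "f \<in> l2space" "infsum (sq_mod f) UNIV \<le> infsum (sq_mod g) UNIV"
proof -
  have "sq_mod f x \<le> sq_mod g x" for x
    unfolding sq_mod_def using power_mono[OF assms(2)[of x] norm_ge_zero, of 2] by simp
  then show "f \<in> l2space" "infsum (sq_mod f) UNIV \<le> infsum (sq_mod g) UNIV"
    using summable_on_dominated[of "sq_mod f" "sq_mod g"] assms(1) by (simp_all add: l2space_iff)
qed

lemma l2space_finite_support: "finite (support_on UNIV f) \<Longrightarrow> f \<in> l2space"
  unfolding l2space_iff
  by (rule summable_on_cong_neutral[where T = "support_on UNIV f", THEN iffD2])
    (auto simp: sq_mod_def support_on_def)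

lemma l2space_scale: "f \<in> l2space \<Longrightarrow> (\<lambda>i. c * f i) \<in> l2space"
proof -
  assume "f \<in> l2space"
  then have "(\<lambda>x. (cmod c)\<^sup>2 * sq_mod f x) summable_on UNIV"
    by (simp add: l2space_iff summable_on_cmult_right)
  moreover have "sq_mod (\<lambda>i. c * f i) = (\<lambda>x. (cmod c)\<^sup>2 * sq_mod f x)"
    by (simp add: sq_mod_def fun_eq_iff norm_mult power_mult_distrib)
  ultimately show ?thesis
    by (simp add: l2space_iff)
qed

lemma l2space_add:
  assumes "f \<in> l2space" "g \<in> l2space"
  shows "(\<lambda>i. f i + g i) \<in> l2space"
proof -
  have sum: "(\<lambda>x. 2 * sq_mod f x + 2 * sq_mod g x) summable_on UNIV"
    using assms by (intro summable_on_add summable_on_cmult_right) (simp_all add: l2space_iff)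
  have le: "sq_mod (\<lambda>i. f i + g i) x \<le> 2 * sq_mod f x + 2 * sq_mod g x" for x
  proof -
    have "(cmod (f x + g x))\<^sup>2 \<le> (cmod (f x) + cmod (g x))\<^sup>2"
      by (simp add: power_mono norm_triangle_ineq)
    also have "\<dots> \<le> 2 * (cmod (f x))\<^sup>2 + 2 * (cmod (g x))\<^sup>2"
      using zero_le_power2[of "cmod (f x) - cmod (g x)"] by (simp add: power2_diff power2_sum)
    finally show ?thesis
      by (simp add: sq_mod_def)
  qed
  show ?thesis
    unfolding l2space_iff by (rule summable_on_dominated(1)[OF sq_mod_nonneg le sum])
qed

lemma l2space_diff: "f \<in> l2space \<Longrightarrow> g \<in> l2space \<Longrightarrow> (\<lambda>i. f i - g i) \<in> l2space"
  using l2space_add[OF _ l2space_scale[of g "-1"], of f] by simp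

lemma norm_le_l2norm:
  assumes "f \<in> l2space"
  shows "cmod (f x) \<le> l2norm f"
proof -
  have "sum (sq_mod f) {x} \<le> infsum (sq_mod f) UNIV"
    using assms by (intro finite_sum_le_infsum) (auto simp: l2space_iff)
  then have "sqrt (sq_mod f x) \<le> l2norm f"
    by (simp add: l2norm_eq)
  then show ?thesis
    by (simp add: sq_mod_def)
qed

lemma l2space_tail:
  assumes "f \<in> l2space" "e > 0"
  obtains F where "finite F" "infsum (\<lambda>x. if x \<in> F then 0 else sq_mod f x) UNIV \<le> e"
proof -
  have s: "sq_mod f summable_on UNIV"
    using assms by (simp add: l2space_iff)
  obtain F where F: "finite F" "dist (sum (sq_mod f) F) (infsum (sq_mod f) UNIV) \<le> e"
    using infsum_finite_approximation[OF s assms(2)] by blast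
  have "infsum (sq_mod f) UNIV = infsum (sq_mod f) (F \<union> -F)"
    by simp
  also have "\<dots> = sum (sq_mod f) F + infsum (sq_mod f) (-F)"
    using F summable_on_subset[OF s] by (subst infsum_Un_disjoint) auto
  finally have "infsum (sq_mod f) (-F) \<le> e"
    using F(2) by (simp add: dist_real_def)
  moreover have "infsum (\<lambda>x. if x \<in> F then 0 else sq_mod f x) UNIV = infsum (sq_mod f) (-F)"
    by (rule infsum_cong_neutral) auto
  ultimately show thesis
    using that F(1) by simp
qed

lemma infsum_sq_mod_le_tail:
  assumes "h \<in> l2space" and le: "\<And>\<beta>. cmod (f \<beta>) \<le> (if \<beta> \<in> F then 0 else cmod (h \<beta>))"
  shows "infsum (sq_mod f) UNIV \<le> infsum (\<lambda>\<beta>. if \<beta> \<in> F then 0 else sq_mod h \<beta>) UNIV"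
proof (rule summable_on_dominated(2)[OF sq_mod_nonneg])
  show "sq_mod f \<beta> \<le> (if \<beta> \<in> F then 0 else sq_mod h \<beta>)" for \<beta>
    using le[of \<beta>] power_mono[OF _ norm_ge_zero, of _ _ 2] by (auto simp: sq_mod_def split: if_splits)
  show "(\<lambda>\<beta>. if \<beta> \<in> F then 0 else sq_mod h \<beta>) summable_on UNIV"
    by (rule summable_on_dominated(1)[of _ "sq_mod h"]) (use assms(1) in \<open>auto simp: l2space_iff\<close>)
qed

lemma hilbert_subspace_mem_if_approx:
  assumes K: "hilbert_subspace K" and "g \<in> l2space" "h \<in> l2space"
    and approx: "\<And>F. finite F \<Longrightarrow> \<exists>X\<in>K. \<forall>\<beta>. cmod (X \<beta> - g \<beta>) \<le> (if \<beta> \<in> F then 0 else cmod (h \<beta>))"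
  shows "g \<in> K"
proof -
  have "\<exists>X\<in>K. l2norm (\<lambda>i. X i - g i) \<le> sqrt (inverse (real (Suc n)))" for n
  proof -
    obtain F where F: "finite F" "infsum (\<lambda>\<beta>. if \<beta> \<in> F then 0 else sq_mod h \<beta>) UNIV \<le> inverse (real (Suc n))"
      using l2space_tail[OF \<open>h \<in> l2space\<close>, of "inverse (real (Suc n))"] by auto
    obtain X where X: "X \<in> K" "\<And>\<beta>. cmod (X \<beta> - g \<beta>) \<le> (if \<beta> \<in> F then 0 else cmod (h \<beta>))"
      using approx[OF F(1)] by blast
    have "infsum (sq_mod (\<lambda>i. X i - g i)) UNIV \<le> infsum (\<lambda>\<beta>. if \<beta> \<in> F then 0 else sq_mod h \<beta>) UNIV"
      by (rule infsum_sq_mod_le_tail[OF \<open>h \<in> l2space\<close>]) (use X(2) in simp)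
    with F(2) have "infsum (sq_mod (\<lambda>i. X i - g i)) UNIV \<le> inverse (real (Suc n))"
      by linarith
    with X(1) show ?thesis
      by (auto simp: l2norm_eq)
  qed
  then obtain X where X: "\<And>n. X n \<in> K" "\<And>n. l2norm (\<lambda>i. X n i - g i) \<le> sqrt (inverse (real (Suc n)))"
    by metis
  have lim: "(\<lambda>n. sqrt (inverse (real (Suc n)))) \<longlonglongrightarrow> 0"
    using tendsto_real_sqrt[OF LIMSEQ_inverse_real_of_nat] by simp
  have "\<forall>\<^sub>F n in sequentially. 0 \<le> l2norm (\<lambda>i. X n i - g i)"
    by (intro always_eventually allI) (simp add: l2norm_def infsum_nonneg)
  moreover have "\<forall>\<^sub>F n in sequentially. l2norm (\<lambda>i. X n i - g i) \<le> sqrt (inverse (real (Suc n)))"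
    by (intro always_eventually allI X(2))
  ultimately have "(\<lambda>n. l2norm (\<lambda>i. X n i - g i)) \<longlonglongrightarrow> 0"
    by (rule real_tendsto_sandwich[OF _ _ tendsto_const lim])
  with K X(1) \<open>g \<in> l2space\<close> show ?thesis
    unfolding hilbert_subspace_def by blast
qed

lemma l2space_reindex:
  assumes "f \<in> l2space" "inj_on h A" "\<And>\<beta>. g \<beta> = (if \<beta> \<in> A then f (h \<beta>) else 0)"
  shows "g \<in> l2space" "infsum (sq_mod g) UNIV \<le> infsum (sq_mod f) UNIV"
proof -
  have sf: "sq_mod f summable_on UNIV"
    using assms(1) by (simp add: l2space_iff)
  have sfA: "sq_mod f summable_on (h ` A)"
    using summable_on_subset[OF sf] by blast
  have eqA: "sq_mod g \<beta> = (sq_mod f \<circ> h) \<beta>" if "\<beta> \<in> A" for \<beta>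
    using that assms(3) by (simp add: sq_mod_def)
  have "(sq_mod f \<circ> h) summable_on A"
    using sfA summable_on_reindex[OF assms(2)] by blast
  then have "sq_mod g summable_on A"
    using summable_on_cong eqA by (metis (no_types, lifting))
  moreover have "sq_mod g summable_on UNIV \<longleftrightarrow> sq_mod g summable_on A"
    by (rule summable_on_cong_neutral) (auto simp: assms(3) sq_mod_def)
  ultimately show "g \<in> l2space"
    by (simp add: l2space_iff)
  have "infsum (sq_mod g) UNIV = infsum (sq_mod g) A"
    by (rule infsum_cong_neutral) (auto simp: assms(3) sq_mod_def)
  also have "\<dots> = infsum (sq_mod f \<circ> h) A"
    using eqA by (rule infsum_cong)
  also have "\<dots> = infsum (sq_mod f) (h ` A)"
    by (rule infsum_reindex[OF assms(2), symmetric])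
  also have "\<dots> \<le> infsum (sq_mod f) UNIV"
    by (rule infsum_mono2[OF sfA sf]) auto
  finally show "infsum (sq_mod g) UNIV \<le> infsum (sq_mod f) UNIV" .
qed

lemma bounded_op_if_contraction:
  assumes "klinear_on H T" "\<And>x. x \<in> H \<Longrightarrow> T x \<in> H"
    "\<And>x. x \<in> H \<Longrightarrow> infsum (sq_mod (T x)) UNIV \<le> infsum (sq_mod x) UNIV"
  shows "bounded_op H T"
  unfolding bounded_op_def kop_def
proof (intro conjI exI[of _ 1] ballI)
  fix f
  assume "f \<in> H"
  then show "l2norm (T f) \<le> 1 * l2norm f"
    using assms(3) by (simp add: l2norm_eq)
qed (use assms in auto)

section \<open>The graph C*-algebra\<close>

definition l2_supp_space :: "'a set \<Rightarrow> ('a \<Rightarrow> complex) set" where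
  "l2_supp_space C = {x \<in> l2space. support_on UNIV x \<subseteq> C}"

lemma ksubspace_l2_supp_space: "ksubspace (l2_supp_space C)"
  unfolding ksubspace_def l2_supp_space_def
  by (auto simp: l2space_finite_support l2space_add l2space_scale support_on_def subset_iff)
    (metis add_0)

lemma hilbert_subspace_l2_supp_space: "hilbert_subspace (l2_supp_space C)"
  unfolding hilbert_subspace_def
proof (intro conjI allI impI ksubspace_l2_supp_space)
  show "l2_supp_space C \<subseteq> l2space"
    by (auto simp: l2_supp_space_def)
  fix X g
  assume X: "\<forall>n. X n \<in> l2_supp_space C" and g: "g \<in> l2space"
    and lim: "(\<lambda>n. l2norm (\<lambda>x. X n x - g x)) \<longlonglongrightarrow> 0"
  have "g \<beta> = 0" if "\<beta> \<notin> C" for \<beta>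
  proof -
    have "cmod (g \<beta>) \<le> l2norm (\<lambda>x. X n x - g x)" for n
    proof -
      have "X n \<in> l2space" "X n \<beta> = 0"
        using X that by (auto simp: l2_supp_space_def support_on_def)
      then show ?thesis
        using norm_le_l2norm[OF l2space_diff[OF _ g], of "X n" \<beta>] by simp
    qed
    then have "cmod (g \<beta>) \<le> 0"
      by (intro tendsto_lowerbound[OF lim]) auto
    then show ?thesis
      by simp
  qed
  with g show "g \<in> l2_supp_space C"
    by (auto simp: l2_supp_space_def support_on_def)
qed

lemma indicator_in_l2_supp_space: "\<alpha> \<in> C \<Longrightarrow> indicator {\<alpha>} \<in> l2_supp_space C"
  by (auto simp: l2_supp_space_def support_on_def indicator_def intro: l2space_finite_support)

context shift_tail_class
begin

lemma proj_op_contraction: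
  assumes "x \<in> l2_supp_space C"
  shows "proj_op G C v x \<in> l2_supp_space C"
    "infsum (sq_mod (proj_op G C v x)) UNIV \<le> infsum (sq_mod x) UNIV"
proof -
  have x: "x \<in> l2space"
    using assms by (simp add: l2_supp_space_def)
  have le: "cmod (proj_op G C v x \<beta>) \<le> cmod (x \<beta>)" for \<beta>
    by (simp add: proj_op_def)
  show "proj_op G C v x \<in> l2_supp_space C"
    using l2space_dominated(1)[OF x le] by (auto simp: l2_supp_space_def support_on_def proj_op_def)
  show "infsum (sq_mod (proj_op G C v x)) UNIV \<le> infsum (sq_mod x) UNIV"
    by (rule l2space_dominated(2)[OF x le])
qed

lemma inj_on_shift: "inj_on (shift G) {\<beta> \<in> C. first_edge \<beta> = Some e}"
  by (rule inj_onI) (metis (mono_tags, lifting) mem_Collect_eq edge_cons_shift)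

lemma inj_on_edge_cons: "inj_on (edge_cons e) {\<beta> \<in> C. path_src G \<beta> = rng G e}"
  by (rule inj_onI) (metis (mono_tags, lifting) mem_Collect_eq shift_edge_cons_mem)

lemma cons_op_contraction:
  assumes "x \<in> l2_supp_space C"
  shows "cons_op G C e x \<in> l2_supp_space C"
    "infsum (sq_mod (cons_op G C e x)) UNIV \<le> infsum (sq_mod x) UNIV"
proof -
  have "x \<in> l2space"
    using assms by (simp add: l2_supp_space_def)
  from l2space_reindex[OF this inj_on_shift] show "cons_op G C e x \<in> l2_supp_space C"
    "infsum (sq_mod (cons_op G C e x)) UNIV \<le> infsum (sq_mod x) UNIV"
    by (auto simp: l2_supp_space_def support_on_def cons_op_def)
qed

lemma uncons_op_contraction:
  assumes "x \<in> l2_supp_space C"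
  shows "uncons_op G C e x \<in> l2_supp_space C"
    "infsum (sq_mod (uncons_op G C e x)) UNIV \<le> infsum (sq_mod x) UNIV"
proof -
  have "x \<in> l2space"
    using assms by (simp add: l2_supp_space_def)
  from l2space_reindex[OF this inj_on_edge_cons] show "uncons_op G C e x \<in> l2_supp_space C"
    "infsum (sq_mod (uncons_op G C e x)) UNIV \<le> infsum (sq_mod x) UNIV"
    by (auto simp: l2_supp_space_def support_on_def uncons_op_def)
qed

lemma leavitt_invariant_l2_supp_space:
  "leavitt_invariant G (path_rep G C (l2_supp_space C)) (l2_supp_space C)"
  by (simp add: leavitt_invariant_path_rep_iff ksubspace_l2_supp_space proj_op_contraction
      cons_op_contraction uncons_op_contraction)

lemma is_adjoint_cons_op:
  assumes "e \<in> edges G"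
  shows "is_adjoint (l2_supp_space C) (cons_op G C e) (uncons_op G C e)"
  unfolding is_adjoint_def
proof (intro ballI)
  fix f g :: "_ \<Rightarrow> complex"
  define A where "A = {\<beta> \<in> C. first_edge \<beta> = Some e}"
  define B where "B = {\<beta> \<in> C. path_src G \<beta> = rng G e}"
  have "B \<subseteq> shift G ` A"
  proof
    fix \<gamma>
    assume "\<gamma> \<in> B"
    then have "edge_cons e \<gamma> \<in> A" "shift G (edge_cons e \<gamma>) = \<gamma>"
      unfolding A_def B_def using edge_cons_mem assms shift_edge_cons_mem by auto
    then show "\<gamma> \<in> shift G ` A"
      by (metis image_eqI)
  qed
  moreover have "shift G ` A \<subseteq> B"
    unfolding A_def B_def using first_edge_mem by auto
  ultimately have BA: "B = shift G ` A"
    by blast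
  have "l2inner (cons_op G C e f) g = infsum (\<lambda>\<beta>. f (shift G \<beta>) * cnj (g \<beta>)) A"
    unfolding l2inner_def by (rule infsum_cong_neutral) (auto simp: A_def cons_op_def)
  also have "\<dots> = infsum ((\<lambda>\<gamma>. f \<gamma> * cnj (g (edge_cons e \<gamma>))) \<circ> shift G) A"
    by (rule infsum_cong) (auto simp: A_def edge_cons_shift)
  also have "\<dots> = infsum (\<lambda>\<gamma>. f \<gamma> * cnj (g (edge_cons e \<gamma>))) B"
    unfolding BA A_def by (rule infsum_reindex[OF inj_on_shift, symmetric])
  also have "\<dots> = l2inner f (uncons_op G C e g)"
    unfolding l2inner_def by (rule infsum_cong_neutral) (auto simp: B_def uncons_op_def)
  finally show "l2inner (cons_op G C e f) g = l2inner f (uncons_op G C e g)" .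
qed

lemma is_adjoint_proj_op: "is_adjoint (l2_supp_space C) (proj_op G C v) (proj_op G C v)"
  unfolding is_adjoint_def l2inner_def by (auto simp: proj_op_def intro!: infsum_cong)

lemma op_le_cons_op_uncons_op:
  "op_le (l2_supp_space C) (\<lambda>x. cons_op G C e (uncons_op G C e x)) (proj_op G C (src G e))"
  unfolding op_le_def
proof (intro ballI conjI)
  fix f
  assume f: "f \<in> l2_supp_space C"
  define r where
    "r \<beta> = (if \<beta> \<in> C \<and> path_src G \<beta> = src G e \<and> first_edge \<beta> \<noteq> Some e then sq_mod f \<beta> else 0)" for \<beta>
  have "r summable_on UNIV"
    using summable_on_dominated(1)[of r "sq_mod f"] f by (auto simp: r_def l2_supp_space_def l2space_iff)
  moreover have "(proj_op G C (src G e) f \<beta> - cons_op G C e (uncons_op G C e f) \<beta>) * cnj (f \<beta>)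
      = complex_of_real (r \<beta>)" for \<beta>
    using first_edge_mem[of \<beta> e]
    by (auto simp: r_def cons_op_uncons_op proj_op_def sq_mod_def complex_norm_square[symmetric])
  ultimately have eq: "l2inner (\<lambda>x. proj_op G C (src G e) f x - cons_op G C e (uncons_op G C e f) x) f
      = complex_of_real (infsum r UNIV)"
    unfolding l2inner_def by (simp add: infsumI[OF has_sum_of_real[OF has_sum_infsum]])
  show "Im (l2inner (\<lambda>x. proj_op G C (src G e) f x - cons_op G C e (uncons_op G C e f) x) f) = 0"
    using eq by simp
  show "0 \<le> Re (l2inner (\<lambda>x. proj_op G C (src G e) f x - cons_op G C e (uncons_op G C e f) x) f)"
    using eq by (simp add: r_def infsum_nonneg)
qed

lemma cstar_rep_path_rep: "cstar_rep G (path_rep G C (l2_supp_space C))"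
  unfolding cstar_rep_def path_rep_def prod.case
proof (intro conjI ballI allI impI hilbert_subspace_l2_supp_space is_adjoint_proj_op
    op_le_cons_op_uncons_op is_adjoint_cons_op bounded_op_if_contraction)
  show "klinear_on (l2_supp_space C) (proj_op G C v)" "klinear_on (l2_supp_space C) (cons_op G C e)"
    "klinear_on (l2_supp_space C) (uncons_op G C e)" for v e
    by (simp_all add: klinear_on_proj_op klinear_on_cons_op klinear_on_uncons_op)
qed (simp_all add: proj_op_contraction cons_op_contraction uncons_op_contraction proj_op_proj_op
    uncons_op_cons_op proj_op_eq_sum)


lemma indicator_mem_cstar_invariant:
  assumes inv: "cstar_invariant G (path_rep G C (l2_supp_space C)) K" and "x \<in> K" "x b \<noteq> 0"
  shows "indicator {b} \<in> K"
proof -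
  have K: "hilbert_subspace K" and linv: "leavitt_invariant G (path_rep G C (l2_supp_space C)) K"
    using inv by (simp_all add: cstar_invariant_def)
  then have ksub: "ksubspace K" and "K \<subseteq> l2_supp_space C"
    by (simp_all add: leavitt_invariant_path_rep_iff)
  with \<open>x \<in> K\<close> have x: "x \<in> l2space" "support_on UNIV x \<subseteq> C"
    by (auto simp: l2_supp_space_def)
  with \<open>x b \<noteq> 0\<close> have "b \<in> C"
    by (auto simp: support_on_def)
  \<comment> \<open>approximate \<open>x b \<delta>\<^sub>b\<close> by \<open>m x\<close>, with \<open>m\<close> separating \<open>b\<close> from the finitely many points
    that carry most of the norm of \<open>x\<close>\<close>
  have "(\<lambda>i. x b * indicator {b} i) \<in> K"
  proof (rule hilbert_subspace_mem_if_approx[OF K _ x(1)])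
    show "(\<lambda>i. x b * indicator {b} i) \<in> l2space"
      using indicator_in_l2_supp_space[OF \<open>b \<in> C\<close>] by (intro l2space_scale) (simp add: l2_supp_space_def)
    fix F :: "('v, 'e) path set"
    assume "finite F"
    have "b \<in> boundary G" "finite (F \<inter> C)" "F \<inter> C \<subseteq> boundary G"
      using \<open>b \<in> C\<close> \<open>finite F\<close> subset_boundary by auto
    then obtain m :: "_ \<Rightarrow> complex" where m: "algebraic_multiplier G m" "m b = 1"
      "\<And>\<beta>. \<beta> \<in> F \<inter> C \<Longrightarrow> \<beta> \<noteq> b \<Longrightarrow> m \<beta> = 0" "range m \<subseteq> {0, 1}"
      using separating_multiplier[OF wf] by metis
    have "mult_by m x \<in> K"
      by (rule mult_by_mem[OF m(1) linv _ \<open>x \<in> K\<close>]) (simp add: l2_supp_space_def)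
    moreover have "cmod (mult_by m x \<beta> - x b * indicator {b} \<beta>) \<le> (if \<beta> \<in> F then 0 else cmod (x \<beta>))"
      for \<beta>
    proof (cases "\<beta> = b")
      case False
      have "m \<beta> = 0 \<or> m \<beta> = 1"
        using subsetD[OF m(4) rangeI[of m \<beta>]] by simp
      moreover have "m \<beta> * x \<beta> = 0" if "\<beta> \<in> F"
        using m(3)[of \<beta>] False x(2) that by (auto simp: support_on_def)
      ultimately show ?thesis
        using False by (auto simp: mult_by_def)
    qed (simp add: m(2) mult_by_def)
    ultimately show "\<exists>X\<in>K. \<forall>\<beta>. cmod (X \<beta> - x b * indicator {b} \<beta>) \<le> (if \<beta> \<in> F then 0 else cmod (x \<beta>))"
      by blast
  qed
  with ksub \<open>x b \<noteq> 0\<close> show ?thesis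
    by (blast intro: ksubspace_scale_cancel)
qed

lemma l2_supp_space_subset:
  assumes K: "hilbert_subspace K" and ind: "\<And>\<beta>. \<beta> \<in> C \<Longrightarrow> indicator {\<beta>} \<in> K"
  shows "l2_supp_space C \<subseteq> K"
proof
  fix y
  assume "y \<in> l2_supp_space C"
  then have y: "y \<in> l2space" "support_on UNIV y \<subseteq> C"
    by (auto simp: l2_supp_space_def)
  show "y \<in> K"
  proof (rule hilbert_subspace_mem_if_approx[OF K y(1) y(1)])
    fix F :: "('v, 'e) path set"
    assume "finite F"
    have "ksubspace K"
      using K by (simp add: hilbert_subspace_def)
    with \<open>finite F\<close> ind have "(\<lambda>i. \<Sum>\<beta>\<in>F \<inter> C. y \<beta> * indicator {\<beta>} i) \<in> K"
      by (intro ksubspace_sum) auto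
    moreover have "(\<lambda>i. \<Sum>\<beta>\<in>F \<inter> C. y \<beta> * indicator {\<beta>} i) = (\<lambda>i. if i \<in> F \<inter> C then y i else 0)"
      by (rule sum_indicator_eq) (use \<open>finite F\<close> in simp)
    moreover have "cmod ((if \<beta> \<in> F \<inter> C then y \<beta> else 0) - y \<beta>) \<le> (if \<beta> \<in> F then 0 else cmod (y \<beta>))"
      for \<beta>
      using y(2) by (auto simp: support_on_def)
    ultimately show "\<exists>X\<in>K. \<forall>\<beta>. cmod (X \<beta> - y \<beta>) \<le> (if \<beta> \<in> F then 0 else cmod (y \<beta>))"
      by (metis (no_types, lifting))
  qed
qed

lemma cstar_irred_path_rep: "cstar_irred G (path_rep G C (l2_supp_space C))"
proof -
  obtain \<alpha> where \<alpha>: "\<alpha> \<in> C"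
    using nonempty by blast
  have nonzero: "\<exists>v\<in>verts G. \<exists>x\<in>l2_supp_space C. proj_op G C v x \<noteq> (\<lambda>_. 0)"
    using path_src_in_verts[OF wf] \<alpha> subset_boundary indicator_in_l2_supp_space[OF \<alpha>]
      proj_op_indicator_ne_zero[OF \<alpha>] by blast
  have "K = {\<lambda>_. 0} \<or> K = l2_supp_space C"
    if inv: "cstar_invariant G (path_rep G C (l2_supp_space C)) K" for K
  proof (cases "K = {\<lambda>_. 0}")
    case False
    have K: "hilbert_subspace K" and linv: "leavitt_invariant G (path_rep G C (l2_supp_space C)) K"
      using inv by (simp_all add: cstar_invariant_def)
    then have "ksubspace K" "K \<subseteq> l2_supp_space C"
      by (simp_all add: leavitt_invariant_path_rep_iff)
    with False obtain x b where "x \<in> K" "x b \<noteq> 0"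
      using ksubspace_zero by blast
    then have "indicator {b} \<in> K" "b \<in> C"
      using indicator_mem_cstar_invariant[OF inv] \<open>K \<subseteq> l2_supp_space C\<close>
      by (auto simp: l2_supp_space_def support_on_def)
    then have "indicator {\<beta>} \<in> K" if "\<beta> \<in> C" for \<beta>
      using indicator_mem_iff[OF linv _ that] by blast
    then have "l2_supp_space C \<subseteq> K"
      by (rule l2_supp_space_subset[OF K])
    with \<open>K \<subseteq> l2_supp_space C\<close> show ?thesis
      by blast
  qed simp
  with nonzero show ?thesis
    unfolding cstar_irred_def using cstar_rep_path_rep by (simp add: path_rep_def)
qed

end

lemma fin_supp_path_rep_alg_equiv_imp_eq:
  assumes "shift_tail_class G C" "shift_tail_class G D"
    and "alg_equiv G (path_rep G C (fin_supp_space C)) (path_rep G D (fin_supp_space D) :: (_, 'k::field, _, _) lrep)"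
  shows "C = D"
proof -
  obtain \<alpha> where "\<alpha> \<in> C"
    using shift_tail_class.nonempty[OF assms(1)] by blast
  show ?thesis
  proof (rule path_rep_alg_equiv_imp_eq[OF assms shift_tail_class.leavitt_invariant_fin_supp_space[OF assms(1)]])
    show "indicator {\<alpha>} \<in> fin_supp_space C"
      using \<open>\<alpha> \<in> C\<close> by (rule indicator_in_fin_supp_space)
  qed (simp_all add: fin_supp_space_def \<open>\<alpha> \<in> C\<close>)
qed

lemma alg_equiv_if_unitary_equiv: "unitary_equiv G R1 R2 \<Longrightarrow> alg_equiv G R1 R2"
  by (auto simp: unitary_equiv_def alg_equiv_def split: prod.splits)

lemma l2_path_rep_unitary_equiv_imp_eq:
  assumes "shift_tail_class G C" "shift_tail_class G D"
    and "unitary_equiv G (path_rep G C (l2_supp_space C)) (path_rep G D (l2_supp_space D))"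
  shows "C = D"
proof -
  obtain \<alpha> where "\<alpha> \<in> C"
    using shift_tail_class.nonempty[OF assms(1)] by blast
  show ?thesis
  proof (rule path_rep_alg_equiv_imp_eq[OF assms(1,2) alg_equiv_if_unitary_equiv[OF assms(3)]
        shift_tail_class.leavitt_invariant_l2_supp_space[OF assms(1)]])
    show "indicator {\<alpha>} \<in> l2_supp_space C"
      using \<open>\<alpha> \<in> C\<close> by (rule indicator_in_l2_supp_space)
  qed (simp_all add: l2_supp_space_def \<open>\<alpha> \<in> C\<close>)
qed

lemma alg_equiv_refl: "alg_equiv G R R"
  by (cases R) (auto simp: alg_equiv_def klinear_on_def intro!: exI[of _ id])

lemma unitary_equiv_refl: "unitary_equiv G R R"
  by (cases R) (auto simp: unitary_equiv_def klinear_on_def intro!: exI[of _ id])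

lemma inj_on_quotient_if_inequivalent:
  assumes "\<And>C. C \<in> A \<Longrightarrow> irr (R C)" "\<And>C. C \<in> A \<Longrightarrow> eqv (R C) (R C)"
    "\<And>C D. C \<in> A \<Longrightarrow> D \<in> A \<Longrightarrow> eqv (R C) (R D) \<Longrightarrow> C = D"
  shows "\<exists>\<phi>. inj_on \<phi> A \<and> \<phi> ` A \<subseteq> {r. irr r} // {(r1, r2). irr r1 \<and> irr r2 \<and> eqv r1 r2}"
proof (intro exI conjI)
  let ?rel = "{(r1, r2). irr r1 \<and> irr r2 \<and> eqv r1 r2}"
  show "inj_on (\<lambda>C. ?rel `` {R C}) A"
  proof (rule inj_onI)
    fix C D
    assume "C \<in> A" "D \<in> A" "?rel `` {R C} = ?rel `` {R D}"
    moreover have "R C \<in> ?rel `` {R C}"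
      using assms(1,2) \<open>C \<in> A\<close> by simp
    ultimately show "C = D"
      using assms(3)[of D C] by auto
  qed
  show "(\<lambda>C. ?rel `` {R C}) ` A \<subseteq> {r. irr r} // ?rel"
    by (intro image_subsetI quotientI) (simp add: assms(1))
qed

lemma shift_tail_equiv_if_all_equivalent:
  assumes "wf_graph G"
    and rep: "\<And>C. shift_tail_class G C \<Longrightarrow> is_rep (R C)"
    and inequiv: "\<And>C D. shift_tail_class G C \<Longrightarrow> shift_tail_class G D \<Longrightarrow> eqv (R C) (R D) \<Longrightarrow> C = D"
    and all: "\<forall>R1 R2. is_rep R1 \<longrightarrow> is_rep R2 \<longrightarrow> eqv R1 R2"
    and "\<alpha> \<in> boundary G" "\<beta> \<in> boundary G"
  shows "shift_tail_equiv G \<alpha> \<beta>"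
proof -
  note \<alpha> = shift_tail_class_of[OF assms(1,5)] and \<beta> = shift_tail_class_of[OF assms(1,6)]
  have "shift_tail_rel G `` {\<alpha>} = shift_tail_rel G `` {\<beta>}"
    using inequiv[OF \<alpha>(1) \<beta>(1)] all rep[OF \<alpha>(1)] rep[OF \<beta>(1)] by blast
  with \<beta>(2) show ?thesis
    using shift_tail_class.shift_tail_equiv_mem[OF \<alpha>] by simp
qed

theorem corollary3p15:
  fixes G :: "('v, 'e) graph"
  assumes "wf_graph G"
  shows
    "(\<exists>\<phi>. inj_on \<phi> (shift_tail_classes G) \<and>
          \<phi> ` shift_tail_classes G \<subseteq> (cstar_irred_classes G :: (('v, 'e) path, 'v, 'e) crep set set))
   \<and> ((\<forall>R1 R2 :: (('v, 'e) path, 'v, 'e) crep. cstar_rep G R1 \<longrightarrow> cstar_rep G R2 \<longrightarrow> unitary_equiv G R1 R2)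
        \<longrightarrow> (\<forall>\<alpha>\<in>boundary G. \<forall>\<beta>\<in>boundary G. shift_tail_equiv G \<alpha> \<beta>))
   \<and> (\<exists>\<phi>. inj_on \<phi> (shift_tail_classes G) \<and>
          \<phi> ` shift_tail_classes G \<subseteq> (leavitt_irred_classes G :: (('v, 'e) path, 'k::field, 'v, 'e) lrep set set))
   \<and> ((\<forall>R1 R2 :: (('v, 'e) path, 'k::field, 'v, 'e) lrep. leavitt_rep G R1 \<longrightarrow> leavitt_rep G R2 \<longrightarrow> alg_equiv G R1 R2)
        \<longrightarrow> (\<forall>\<alpha>\<in>boundary G. \<forall>\<beta>\<in>boundary G. shift_tail_equiv G \<alpha> \<beta>))"
proof (intro conjI impI ballI)
  have classes: "shift_tail_class G C" if "C \<in> shift_tail_classes G" for C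
    using assms that by (simp add: shift_tail_class_def)
  show "\<exists>\<phi>. inj_on \<phi> (shift_tail_classes G) \<and>
      \<phi> ` shift_tail_classes G \<subseteq> (cstar_irred_classes G :: (('v, 'e) path, 'v, 'e) crep set set)"
    unfolding cstar_irred_classes_def
    using classes shift_tail_class.cstar_irred_path_rep unitary_equiv_refl l2_path_rep_unitary_equiv_imp_eq
    by (intro inj_on_quotient_if_inequivalent) blast+
  show "\<exists>\<phi>. inj_on \<phi> (shift_tail_classes G) \<and>
      \<phi> ` shift_tail_classes G \<subseteq> (leavitt_irred_classes G :: (('v, 'e) path, 'k, 'v, 'e) lrep set set)"
    unfolding leavitt_irred_classes_def
    using classes shift_tail_class.leavitt_irred_path_rep alg_equiv_refl fin_supp_path_rep_alg_equiv_imp_eq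
    by (intro inj_on_quotient_if_inequivalent) blast+
  show "shift_tail_equiv G \<alpha> \<beta>"
    if "\<forall>R1 R2 :: (('v, 'e) path, 'v, 'e) crep. cstar_rep G R1 \<longrightarrow> cstar_rep G R2 \<longrightarrow> unitary_equiv G R1 R2"
      "\<alpha> \<in> boundary G" "\<beta> \<in> boundary G" for \<alpha> \<beta>
    using shift_tail_equiv_if_all_equivalent[OF assms shift_tail_class.cstar_rep_path_rep
        l2_path_rep_unitary_equiv_imp_eq that] .
  show "shift_tail_equiv G \<alpha> \<beta>"
    if "\<forall>R1 R2 :: (('v, 'e) path, 'k, 'v, 'e) lrep. leavitt_rep G R1 \<longrightarrow> leavitt_rep G R2 \<longrightarrow> alg_equiv G R1 R2"
      "\<alpha> \<in> boundary G" "\<beta> \<in> boundary G" for \<alpha> \<beta>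
    using shift_tail_equiv_if_all_equivalent[OF assms shift_tail_class.leavitt_rep_fin_supp_path_rep
        fin_supp_path_rep_alg_equiv_imp_eq that] .
qed

end
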